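(* Let $f,g\in\mathcal{H}$ be strongly non-polynomial functions such that $f(t)\gg t^{\delta_1}$ and $g(t)\gg t^{\delta_2}$ for some $\delta_1,\delta_2>0$, and $g(t)\ll f(t)$. Then: (i) $S(f,k)=S(g,k)$ for some $k\in\mathbb{N}$ if and only if $f\sim g$; (ii) if $S(f,k)\cap S(g,\ell)\ne\emptyset$ then $k\ge\ell$; moreover, if the function $|f^{(k)}(t)|^{-1/k}$ belongs to $S(g,\ell)$ and $f\not\sim g$, then $k\ge\ell+1$; (iii) there exist infinitely many pairs of integers $(k,\ell)$ with $S(f,k)\cap S(g,\ell)\ne\emptyset$.
   Context: $\mathcal{H}$ is a fixed Hardy field (subfield of germs at $+\infty$ of real functions, closed under differentiation) containing the logarithmico-exponential functions, closed under composition and compositional inversion. $f$ is strongly non-polynomial if $t^d\prec f(t)\prec t^{d+1}$ for some integer $d\ge0$. $f\prec g$: $f/g\to0$; $f\ll g$: $|f|\le C|g|$ eventually; $f\sim g$: $f/g$ tends to a finite non-zero limit. For such $f$ and $k$ large enough that $f^{(k)}(t)\to0$, define $S(f,k)=\{g\in\mathcal{H}:\ |f^{(k)}(t)|^{-1/k}\preceq g(t)\prec|f^{(k+1)}(t)|^{-1/(k+1)}\}$, where $u\preceq v$ means that $\lim_{t\to\infty}|v(t)/u(t)|$ is non-zero (possibly infinite). *)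

theory Defs
  imports "HOL-Analysis.Analysis"
begin

text \<open>Germs at +infinity are represented by functions real => real; a set of germs is
  represented by the set of all its representatives (closed under eventual equality).\<close>

definition hardy_field :: "(real \<Rightarrow> real) set \<Rightarrow> bool" where
  "hardy_field H \<longleftrightarrow>
     (\<forall>f g. f \<in> H \<longrightarrow> (\<forall>\<^sub>F x in at_top. f x = g x) \<longrightarrow> g \<in> H) \<and>
     (\<lambda>_. 0) \<in> H \<and> (\<lambda>_. 1) \<in> H \<and>
     (\<forall>f\<in>H. \<forall>g\<in>H. (\<lambda>x. f x + g x) \<in> H) \<and>
     (\<forall>f\<in>H. (\<lambda>x. - f x) \<in> H) \<and>
     (\<forall>f\<in>H. \<forall>g\<in>H. (\<lambda>x. f x * g x) \<in> H) \<and>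
     (\<forall>f\<in>H. (\<forall>\<^sub>F x in at_top. f x = 0) \<or> (\<exists>h\<in>H. \<forall>\<^sub>F x in at_top. f x * h x = 1)) \<and>
     (\<forall>f\<in>H. (\<forall>\<^sub>F x in at_top. f differentiable (at x)) \<and> deriv f \<in> H)"

inductive le_fun :: "(real \<Rightarrow> real) \<Rightarrow> bool" where
  le_const: "le_fun (\<lambda>_. c)"
| le_ident: "le_fun (\<lambda>x. x)"
| le_add: "le_fun f \<Longrightarrow> le_fun g \<Longrightarrow> le_fun (\<lambda>x. f x + g x)"
| le_minus: "le_fun f \<Longrightarrow> le_fun (\<lambda>x. - f x)"
| le_mult: "le_fun f \<Longrightarrow> le_fun g \<Longrightarrow> le_fun (\<lambda>x. f x * g x)"
| le_divide: "le_fun f \<Longrightarrow> le_fun g \<Longrightarrow> (\<forall>\<^sub>F x in at_top. g x \<noteq> 0) \<Longrightarrow>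
    le_fun (\<lambda>x. f x / g x)"
| le_exp: "le_fun f \<Longrightarrow> le_fun (\<lambda>x. exp (f x))"
| le_ln: "le_fun f \<Longrightarrow> (\<forall>\<^sub>F x in at_top. f x > 0) \<Longrightarrow> le_fun (\<lambda>x. ln (f x))"

definition good_hardy_field :: "(real \<Rightarrow> real) set \<Rightarrow> bool" where
  "good_hardy_field H \<longleftrightarrow> hardy_field H \<and>
     (\<forall>f. le_fun f \<longrightarrow> f \<in> H) \<and>
     (\<forall>f\<in>H. \<forall>g\<in>H. filterlim g at_top at_top \<longrightarrow> (\<lambda>x. f (g x)) \<in> H) \<and>
     (\<forall>f\<in>H. filterlim f at_top at_top \<longrightarrow>
        (\<exists>h\<in>H. filterlim h at_top at_top \<and> (\<forall>\<^sub>F x in at_top. f (h x) = x)))"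

definition hderiv :: "nat \<Rightarrow> (real \<Rightarrow> real) \<Rightarrow> real \<Rightarrow> real" where
  "hderiv k f = (deriv ^^ k) f"

definition sprec :: "(real \<Rightarrow> real) \<Rightarrow> (real \<Rightarrow> real) \<Rightarrow> bool" where
  "sprec f g \<longleftrightarrow> ((\<lambda>t. f t / g t) \<longlongrightarrow> 0) at_top"

definition lless :: "(real \<Rightarrow> real) \<Rightarrow> (real \<Rightarrow> real) \<Rightarrow> bool" where
  "lless f g \<longleftrightarrow> (\<exists>C. \<forall>\<^sub>F t in at_top. \<bar>f t\<bar> \<le> C * \<bar>g t\<bar>)"

definition hsim :: "(real \<Rightarrow> real) \<Rightarrow> (real \<Rightarrow> real) \<Rightarrow> bool" where
  "hsim f g \<longleftrightarrow> (\<exists>L. L \<noteq> 0 \<and> ((\<lambda>t. f t / g t) \<longlongrightarrow> L) at_top)"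

definition wprec :: "(real \<Rightarrow> real) \<Rightarrow> (real \<Rightarrow> real) \<Rightarrow> bool" where
  "wprec u v \<longleftrightarrow> (\<exists>L>0. ((\<lambda>t. \<bar>v t / u t\<bar>) \<longlongrightarrow> L) at_top) \<or>
                  filterlim (\<lambda>t. \<bar>v t / u t\<bar>) at_top at_top"

definition strongly_nonpoly :: "(real \<Rightarrow> real) \<Rightarrow> bool" where
  "strongly_nonpoly f \<longleftrightarrow> (\<exists>d::nat. sprec (\<lambda>t. t ^ d) f \<and> sprec f (\<lambda>t. t ^ (d + 1)))"

definition admissible :: "(real \<Rightarrow> real) \<Rightarrow> nat \<Rightarrow> bool" where
  "admissible f k \<longleftrightarrow> (hderiv k f \<longlongrightarrow> 0) at_top"

definition rootderiv :: "(real \<Rightarrow> real) \<Rightarrow> nat \<Rightarrow> real \<Rightarrow> real" where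
  "rootderiv f k = (\<lambda>t. \<bar>hderiv k f t\<bar> powr (- 1 / real k))"

definition S :: "(real \<Rightarrow> real) set \<Rightarrow> (real \<Rightarrow> real) \<Rightarrow> nat \<Rightarrow> (real \<Rightarrow> real) set" where
  "S H f k = {g \<in> H. wprec (rootderiv f k) g \<and> sprec g (rootderiv f (k + 1))}"

end

(*
  In a Hardy field every quotient of germs has a limit in
  [0, \<infinity>], and an eventual bound M |v'| \<le> |u'| integrates to (M/2) |v| \<le> |u| when v tends
  to 0 or \<infinity> (Cauchy mean value theorem); so \<lless> and \<prec> pass to derivatives and
  l'Hospital's rule runs in both directions.

  For f as in the theorem, every f^(k) is eventually non-zero and tends to 0 or \<infinity>,
  t^(\<delta>-k) \<lless> f^(k) \<lless> t^(d+3/2-k), and t f^(k+1) \<lless> f^(k) once f^(k) \<longrightarrow> 0 (a larger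
  logarithmic derivative would violate the lower bound). Hence the roots
  r_k(f) = |f^(k)|^(-1/k) satisfy r_k(f) \<prec> r_(k+1)(f), lie in S(f,k), and are squeezed
  between multiples of t^(1-(d+3/2)/k) and t^(1-\<delta>/k).

  (i) S(f,k) = S(g,k) forces r_k(f)/r_k(g), hence f^(k)/g^(k), to a finite non-zero limit,
  which l'Hospital's rule carries down to f/g; conversely f/g \<longrightarrow> L \<noteq> 0 lifts to all
  derivatives. (ii) g \<lless> f gives r_l(f) \<lless> r_l(g), incompatible with
  r_l(g) \<preceq> h \<prec> r_(k+1)(f) \<le> r_l(f) when k < l. (iii) For large k, r_k(f) lies between
  two roots of g, hence in some S(g,l).
*)

theory Submission
  imports Defs "HOL-Real_Asymp.Real_Asymp"
begin

lemma hderiv_0 [simp]: "hderiv 0 f = f"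
  by (simp add: hderiv_def)

lemma hderiv_Suc: "hderiv (Suc k) f = deriv (hderiv k f)"
  by (simp add: hderiv_def)

lemma hderiv_Suc': "hderiv (Suc k) f = hderiv k (deriv f)"
  by (simp only: hderiv_def funpow_Suc_right comp_def)

section \<open>Comparison of derivatives at infinity\<close>

lemma mono_tendsto_or_at_top:
  fixes f :: "real \<Rightarrow> real"
  assumes mono: "\<And>x y. a \<le> x \<Longrightarrow> x \<le> y \<Longrightarrow> f x \<le> f y"
  shows "(\<exists>c. (f \<longlongrightarrow> c) at_top) \<or> filterlim f at_top at_top"
proof (cases "bdd_above (f ` {a..})")
  case True
  have "(f \<longlongrightarrow> Sup (f ` {a..})) at_top"
  proof (rule increasing_tendsto)
    show "\<forall>\<^sub>F x in at_top. f x \<le> Sup (f ` {a..})"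
      using eventually_ge_at_top[of a] by eventually_elim (use True in \<open>auto intro: cSup_upper\<close>)
    fix y assume "y < Sup (f ` {a..})"
    then obtain x0 where "a \<le> x0" "y < f x0"
      using less_cSupE[of y "f ` {a..}"] by auto
    then have "y < f x" if "x0 \<le> x" for x
      using mono[of x0 x] that by linarith
    then show "\<forall>\<^sub>F x in at_top. y < f x"
      unfolding eventually_at_top_linorder by blast
  qed
  then show ?thesis by blast
next
  case False
  have "\<forall>\<^sub>F x in at_top. Z \<le> f x" for Z
  proof -
    obtain x0 where "a \<le> x0" "Z < f x0"
      using False by (auto simp: bdd_above_def not_le)
    then have "Z \<le> f x" if "x0 \<le> x" for x
      using mono[of x0 x] that by linarith
    then show ?thesis
      unfolding eventually_at_top_linorder by blast
  qed
  then show ?thesis unfolding filterlim_at_top by blast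
qed

lemma tendsto_or_at_top_if_deriv_nonneg:
  fixes f :: "real \<Rightarrow> real"
  assumes "\<forall>\<^sub>F x in at_top. DERIV f x :> f' x \<and> f' x \<ge> 0"
  shows "(\<exists>c. (f \<longlongrightarrow> c) at_top) \<or> filterlim f at_top at_top"
proof -
  obtain a where a: "\<And>x. x \<ge> a \<Longrightarrow> DERIV f x :> f' x \<and> f' x \<ge> 0"
    using assms unfolding eventually_at_top_linorder by blast
  have "f x \<le> f y" if "a \<le> x" "x \<le> y" for x y
  proof (rule DERIV_nonneg_imp_nondecreasing[OF that(2)])
    fix z assume "x \<le> z" "z \<le> y"
    with a[of z] that(1) show "\<exists>y. DERIV f z :> y \<and> y \<ge> 0" by auto
  qed
  then show ?thesis by (rule mono_tendsto_or_at_top)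
qed

lemma eventually_const_if_deriv_0:
  fixes h :: "real \<Rightarrow> real"
  assumes "\<forall>\<^sub>F t in at_top. DERIV h t :> 0"
  shows "\<exists>c. \<forall>\<^sub>F t in at_top. h t = c"
proof -
  obtain a where "\<And>t. t \<ge> a \<Longrightarrow> DERIV h t :> 0"
    using assms unfolding eventually_at_top_linorder by blast
  then have "h constant_on {a<..}"
    by (intro has_field_derivative_0_imp_constant_on) auto
  then obtain c where "\<And>t. t > a \<Longrightarrow> h t = c"
    unfolding constant_on_def by auto
  then show ?thesis
    using eventually_gt_at_top[of a] by (blast intro: eventually_mono)
qed

lemma lhospital_at_top_0_0:
  fixes f g f' g' :: "real \<Rightarrow> real"
  assumes f0: "(f \<longlongrightarrow> 0) at_top" and g0: "(g \<longlongrightarrow> 0) at_top"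
    and g_nz: "\<forall>\<^sub>F x in at_top. g x \<noteq> 0" and g'_nz: "\<forall>\<^sub>F x in at_top. g' x \<noteq> 0"
    and Df: "\<forall>\<^sub>F x in at_top. DERIV f x :> f' x" and Dg: "\<forall>\<^sub>F x in at_top. DERIV g x :> g' x"
    and lim: "((\<lambda>x. f' x / g' x) \<longlongrightarrow> L) at_top"
  shows "((\<lambda>x. f x / g x) \<longlongrightarrow> L) at_top"
  unfolding filterlim_at_top_to_right
proof (rule lhopital_right_0)
  let ?D = "\<lambda>f' x. f' (inverse x) * - (inverse x ^ Suc (Suc 0))"
  show "((\<lambda>x. f (inverse x)) \<longlongrightarrow> 0) (at_right 0)" "((\<lambda>x. g (inverse x)) \<longlongrightarrow> 0) (at_right 0)"
    using f0 g0 unfolding filterlim_at_top_to_right .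
  show "\<forall>\<^sub>F x in at_right 0. g (inverse x) \<noteq> 0"
    using g_nz unfolding eventually_at_right_to_top by simp
  show "\<forall>\<^sub>F x in at_right 0. DERIV (\<lambda>x. f (inverse x)) x :> ?D f' x"
    unfolding eventually_at_right_to_top using Df eventually_ge_at_top[where c=1]
    by eventually_elim (rule derivative_eq_intros DERIV_chain'[where f=inverse] | simp)+
  show "\<forall>\<^sub>F x in at_right 0. DERIV (\<lambda>x. g (inverse x)) x :> ?D g' x"
    unfolding eventually_at_right_to_top using Dg eventually_ge_at_top[where c=1]
    by eventually_elim (rule derivative_eq_intros DERIV_chain'[where f=inverse] | simp)+
  show "\<forall>\<^sub>F x in at_right 0. ?D g' x \<noteq> 0"
    unfolding eventually_at_right_to_top using g'_nz eventually_ge_at_top[where c=1]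
    by eventually_elim auto
  have "\<forall>\<^sub>F x in at_top. f' x / g' x = ?D f' (inverse x) / ?D g' (inverse x)"
    using eventually_ge_at_top[where c=1] by eventually_elim simp
  then show "((\<lambda>x. ?D f' x / ?D g' x) \<longlongrightarrow> L) (at_right 0)"
    unfolding filterlim_at_right_to_top by (rule Lim_transform_eventually[OF lim])
qed

lemma abs_deriv_ge_imp_abs_diff_ge:
  fixes u v u' v' :: "real \<Rightarrow> real"
  assumes deriv: "\<And>x. x \<ge> a \<Longrightarrow> DERIV u x :> u' x \<and> DERIV v x :> v' x \<and> v' x \<noteq> 0
      \<and> M * \<bar>v' x\<bar> \<le> \<bar>u' x\<bar>"
    and "a \<le> t" "t < s"
  shows "M * \<bar>v s - v t\<bar> \<le> \<bar>u s - u t\<bar>"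
proof -
  have "\<exists>c. t < c \<and> c < s \<and> (u s - u t) * v' c = (v s - v t) * u' c"
  proof (rule GMVT'[where f=u and g=v and f'=u' and g'=v'])
    show "isCont u z" "isCont v z" if "t \<le> z" for z
      using deriv[of z] that assms(2) by (auto intro: DERIV_isCont)
    show "DERIV u z :> u' z" "DERIV v z :> v' z" if "t < z" for z
      using deriv[of z] that assms(2) by auto
  qed (fact \<open>t < s\<close>)
  then obtain c where c: "t < c" "c < s" "(u s - u t) * v' c = (v s - v t) * u' c"
    by blast
  with deriv[of c] assms(2) have v'c: "v' c \<noteq> 0" "M * \<bar>v' c\<bar> \<le> \<bar>u' c\<bar>" by auto
  have "(M * \<bar>v s - v t\<bar>) * \<bar>v' c\<bar> = \<bar>v s - v t\<bar> * (M * \<bar>v' c\<bar>)"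
    by (simp add: ac_simps)
  also have "\<dots> \<le> \<bar>v s - v t\<bar> * \<bar>u' c\<bar>"
    using v'c(2) by (rule mult_left_mono) simp
  also have "\<dots> = \<bar>u s - u t\<bar> * \<bar>v' c\<bar>"
    using c(3) by (simp flip: abs_mult)
  finally show ?thesis using v'c(1) by simp
qed

lemma abs_deriv_ge_imp_abs_ge_unbounded:
  fixes u v u' v' :: "real \<Rightarrow> real"
  assumes deriv: "\<forall>\<^sub>F x in at_top. DERIV u x :> u' x \<and> DERIV v x :> v' x \<and> v' x \<noteq> 0
      \<and> M * \<bar>v' x\<bar> \<le> \<bar>u' x\<bar>"
    and M: "M > 0" and v_inf: "filterlim (\<lambda>x. \<bar>v x\<bar>) at_top at_top"
  shows "\<forall>\<^sub>F x in at_top. M/2 * \<bar>v x\<bar> \<le> \<bar>u x\<bar>"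
proof -
  obtain a where a: "\<And>x. x \<ge> a \<Longrightarrow> DERIV u x :> u' x \<and> DERIV v x :> v' x \<and> v' x \<noteq> 0
      \<and> M * \<bar>v' x\<bar> \<le> \<bar>u' x\<bar>"
    using deriv unfolding eventually_at_top_linorder by blast
  have "\<forall>\<^sub>F x in at_top. 2 * (M * \<bar>v a\<bar> + \<bar>u a\<bar>) / M \<le> \<bar>v x\<bar>"
    using v_inf unfolding filterlim_at_top by blast
  then show ?thesis
    using eventually_gt_at_top[of a]
  proof eventually_elim
    case (elim x)
    have "M * \<bar>v x - v a\<bar> \<le> \<bar>u x - u a\<bar>"
      using abs_deriv_ge_imp_abs_diff_ge[OF a] elim(2) by simp
    moreover have "M * \<bar>v x\<bar> \<le> M * \<bar>v x - v a\<bar> + M * \<bar>v a\<bar>"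
      using M by (simp flip: distrib_left)
    moreover have "2 * (M * \<bar>v a\<bar>) + 2 * \<bar>u a\<bar> \<le> M * \<bar>v x\<bar>"
      using elim(1) M by (simp add: field_simps)
    ultimately show ?case by linarith
  qed
qed

lemma abs_deriv_ge_imp_abs_ge_vanishing:
  fixes u v u' v' :: "real \<Rightarrow> real"
  assumes deriv: "\<forall>\<^sub>F x in at_top. DERIV u x :> u' x \<and> DERIV v x :> v' x \<and> v' x \<noteq> 0
      \<and> M * \<bar>v' x\<bar> \<le> \<bar>u' x\<bar>"
    and u0: "(u \<longlongrightarrow> 0) at_top" and v0: "(v \<longlongrightarrow> 0) at_top"
  shows "\<forall>\<^sub>F x in at_top. M * \<bar>v x\<bar> \<le> \<bar>u x\<bar>"
proof -
  obtain a where a: "\<And>x. x \<ge> a \<Longrightarrow> DERIV u x :> u' x \<and> DERIV v x :> v' x \<and> v' x \<noteq> 0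
      \<and> M * \<bar>v' x\<bar> \<le> \<bar>u' x\<bar>"
    using deriv unfolding eventually_at_top_linorder by blast
  have "M * \<bar>v t\<bar> \<le> \<bar>u t\<bar>" if "t \<ge> a" for t
  proof (rule tendsto_le[OF trivial_limit_at_top_linorder])
    show "((\<lambda>s. \<bar>u s - u t\<bar>) \<longlongrightarrow> \<bar>u t\<bar>) at_top"
      "((\<lambda>s. M * \<bar>v s - v t\<bar>) \<longlongrightarrow> M * \<bar>v t\<bar>) at_top"
      using tendsto_rabs[OF tendsto_diff[OF u0 tendsto_const[of "u t"]]]
        tendsto_mult[OF tendsto_const[of M] tendsto_rabs[OF tendsto_diff[OF v0 tendsto_const[of "v t"]]]]
      by simp_all
    show "\<forall>\<^sub>F s in at_top. M * \<bar>v s - v t\<bar> \<le> \<bar>u s - u t\<bar>"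
      using eventually_gt_at_top[of t] by eventually_elim (rule abs_deriv_ge_imp_abs_diff_ge[OF a that])
  qed
  then show ?thesis unfolding eventually_at_top_linorder by blast
qed

lemma abs_deriv_ge_imp_abs_ge:
  fixes u v u' v' :: "real \<Rightarrow> real"
  assumes deriv: "\<forall>\<^sub>F x in at_top. DERIV u x :> u' x \<and> DERIV v x :> v' x \<and> v' x \<noteq> 0
      \<and> M * \<bar>v' x\<bar> \<le> \<bar>u' x\<bar>"
    and M: "M > 0"
    and lim: "filterlim (\<lambda>x. \<bar>v x\<bar>) at_top at_top \<or> ((u \<longlongrightarrow> 0) at_top \<and> (v \<longlongrightarrow> 0) at_top)"
  shows "\<forall>\<^sub>F x in at_top. M/2 * \<bar>v x\<bar> \<le> \<bar>u x\<bar>"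
  using lim
proof
  assume "(u \<longlongrightarrow> 0) at_top \<and> (v \<longlongrightarrow> 0) at_top"
  with abs_deriv_ge_imp_abs_ge_vanishing[OF deriv] have "\<forall>\<^sub>F x in at_top. M * \<bar>v x\<bar> \<le> \<bar>u x\<bar>"
    by blast
  moreover have "M/2 * \<bar>v x\<bar> \<le> M * \<bar>v x\<bar>" for x
    using M by (simp add: mult_right_mono)
  ultimately show ?thesis
    by (auto elim: eventually_mono intro: order_trans)
qed (rule abs_deriv_ge_imp_abs_ge_unbounded[OF deriv M])

section \<open>Asymptotic relations\<close>

lemma lless_trans: "lless p q \<Longrightarrow> lless q r \<Longrightarrow> lless p r"
proof -
  assume "lless p q" "lless q r"
  then obtain C D where C: "\<forall>\<^sub>F t in at_top. \<bar>p t\<bar> \<le> C * \<bar>q t\<bar>"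
    and D: "\<forall>\<^sub>F t in at_top. \<bar>q t\<bar> \<le> D * \<bar>r t\<bar>"
    unfolding lless_def by blast
  from C D have "\<forall>\<^sub>F t in at_top. \<bar>p t\<bar> \<le> (\<bar>C\<bar> * \<bar>D\<bar>) * \<bar>r t\<bar>"
  proof eventually_elim
    case (elim t)
    have "\<bar>p t\<bar> \<le> \<bar>C\<bar> * \<bar>q t\<bar>"
      using elim(1) abs_ge_self[of C] by (meson abs_ge_zero mult_right_mono order_trans)
    also have "\<dots> \<le> \<bar>C\<bar> * (\<bar>D\<bar> * \<bar>r t\<bar>)"
      using elim(2) abs_ge_self[of D] by (meson abs_ge_zero mult_left_mono mult_right_mono order_trans)
    finally show ?case by (simp add: mult_ac)
  qed
  then show "lless p r" unfolding lless_def by blast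
qed

lemma lless_powr:
  assumes "a \<le> b"
  shows "lless (\<lambda>t. t powr a) (\<lambda>t. t powr b)"
proof -
  have "\<forall>\<^sub>F t in at_top. \<bar>t powr a\<bar> \<le> 1 * \<bar>t powr b\<bar>"
    using eventually_ge_at_top[of 1] by eventually_elim (simp add: assms powr_mono)
  then show ?thesis unfolding lless_def by blast
qed

lemma lless_imp_eventually_ge:
  assumes "lless p q"
  shows "\<exists>c>0. \<forall>\<^sub>F t in at_top. c * \<bar>p t\<bar> \<le> \<bar>q t\<bar>"
proof -
  obtain C where "\<forall>\<^sub>F t in at_top. \<bar>p t\<bar> \<le> C * \<bar>q t\<bar>"
    using assms unfolding lless_def by blast
  then have "\<forall>\<^sub>F t in at_top. 1 / (\<bar>C\<bar> + 1) * \<bar>p t\<bar> \<le> \<bar>q t\<bar>"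
  proof eventually_elim
    case (elim t)
    have "C * \<bar>q t\<bar> \<le> (\<bar>C\<bar> + 1) * \<bar>q t\<bar>" by (intro mult_right_mono) auto
    with elim show ?case by (simp add: divide_le_eq add_pos_nonneg mult.commute)
  qed
  then show ?thesis by (intro exI[of _ "1 / (\<bar>C\<bar> + 1)"]) (simp add: add_pos_nonneg)
qed

lemma lless_tendsto_0:
  assumes "lless u v" "(v \<longlongrightarrow> 0) at_top"
  shows "(u \<longlongrightarrow> 0) at_top"
proof -
  from assms(1) obtain C where C: "\<forall>\<^sub>F t in at_top. \<bar>u t\<bar> \<le> C * \<bar>v t\<bar>"
    unfolding lless_def by blast
  show ?thesis
  proof (rule Lim_null_comparison)
    show "\<forall>\<^sub>F t in at_top. norm (u t) \<le> \<bar>C\<bar> * \<bar>v t\<bar>"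
      using C
    proof eventually_elim
      case (elim t)
      have "C * \<bar>v t\<bar> \<le> \<bar>C\<bar> * \<bar>v t\<bar>" by (rule mult_right_mono) simp_all
      with elim show ?case by simp
    qed
    show "((\<lambda>t. \<bar>C\<bar> * \<bar>v t\<bar>) \<longlongrightarrow> 0) at_top"
      using tendsto_mult_right_zero[OF tendsto_rabs_zero[OF assms(2)], of "\<bar>C\<bar>"] by simp
  qed
qed

lemma lless_abs_at_top:
  assumes "lless p q" "filterlim (\<lambda>t. \<bar>p t\<bar>) at_top at_top"
  shows "filterlim (\<lambda>t. \<bar>q t\<bar>) at_top at_top"
proof -
  obtain c where c: "c > 0" "\<forall>\<^sub>F t in at_top. c * \<bar>p t\<bar> \<le> \<bar>q t\<bar>"
    using lless_imp_eventually_ge[OF assms(1)] by blast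
  have "filterlim (\<lambda>t. c * \<bar>p t\<bar>) at_top at_top"
    by (rule filterlim_tendsto_pos_mult_at_top[OF tendsto_const c(1) assms(2)])
  then show ?thesis using c(2) by (rule filterlim_at_top_mono)
qed

lemma sprec_imp_eventually_less:
  assumes "sprec u v" "e > 0" "\<forall>\<^sub>F t in at_top. v t \<noteq> 0"
  shows "\<forall>\<^sub>F t in at_top. \<bar>u t\<bar> < e * \<bar>v t\<bar>"
proof -
  have "((\<lambda>t. \<bar>u t / v t\<bar>) \<longlongrightarrow> 0) at_top"
    using tendsto_rabs_zero assms(1) unfolding sprec_def by blast
  from order_tendstoD(2)[OF this assms(2)] assms(3) show ?thesis
    by eventually_elim (simp add: abs_divide divide_less_eq)
qed

lemma sprec_imp_lless:
  assumes "sprec u v" "\<forall>\<^sub>F t in at_top. v t \<noteq> 0"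
  shows "lless u v"
proof -
  have "\<forall>\<^sub>F t in at_top. \<bar>u t\<bar> \<le> 1 * \<bar>v t\<bar>"
    using sprec_imp_eventually_less[OF assms(1) zero_less_one assms(2)] by eventually_elim simp
  then show ?thesis unfolding lless_def by blast
qed

lemma sprec_not_eventually_ge:
  assumes "sprec u v" "\<forall>\<^sub>F t in at_top. v t \<noteq> 0" "M > 0"
  shows "\<not> (\<forall>\<^sub>F t in at_top. M * \<bar>v t\<bar> \<le> \<bar>u t\<bar>)"
proof
  assume "\<forall>\<^sub>F t in at_top. M * \<bar>v t\<bar> \<le> \<bar>u t\<bar>"
  with sprec_imp_eventually_less[OF assms(1,3,2)] have "eventually (\<lambda>_::real. False) at_top"
    by eventually_elim linarith
  then show False by simp
qed

lemma sprec_not_wprec: "sprec u v \<Longrightarrow> \<not> wprec v u"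
proof
  assume "sprec u v" "wprec v u"
  then have lim0: "((\<lambda>t. \<bar>u t / v t\<bar>) \<longlongrightarrow> 0) at_top"
    using tendsto_rabs_zero unfolding sprec_def by blast
  from \<open>wprec v u\<close> show False unfolding wprec_def
  proof
    assume "\<exists>L>0. ((\<lambda>t. \<bar>u t / v t\<bar>) \<longlongrightarrow> L) at_top"
    then obtain L where L: "L > 0" "((\<lambda>t. \<bar>u t / v t\<bar>) \<longlongrightarrow> L) at_top" by blast
    with tendsto_unique[OF trivial_limit_at_top_linorder L(2) lim0] show False by simp
  next
    assume "filterlim (\<lambda>t. \<bar>u t / v t\<bar>) at_top at_top"
    then have "\<forall>\<^sub>F t in at_top. 1 \<le> \<bar>u t / v t\<bar>" unfolding filterlim_at_top by blast
    with order_tendstoD(2)[OF lim0 zero_less_one] have "eventually (\<lambda>_::real. False) at_top"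
      by eventually_elim linarith
    then show False by simp
  qed
qed

lemma sprec_imp_wprec:
  assumes "sprec u v" "\<forall>\<^sub>F t in at_top. u t \<noteq> 0" "\<forall>\<^sub>F t in at_top. v t \<noteq> 0"
  shows "wprec u v"
proof -
  have "((\<lambda>t. \<bar>u t / v t\<bar>) \<longlongrightarrow> 0) at_top"
    using tendsto_rabs_zero assms(1) unfolding sprec_def by blast
  moreover have "\<forall>\<^sub>F t in at_top. 0 < \<bar>u t / v t\<bar>"
    using assms(2,3) by eventually_elim simp
  ultimately have "filterlim (\<lambda>t. inverse \<bar>u t / v t\<bar>) at_top at_top"
    by (rule filterlim_inverse_at_top)
  then show ?thesis unfolding wprec_def by (simp add: abs_divide)
qed

lemma wprec_imp_eventually_ge:
  assumes "wprec p h" "\<forall>\<^sub>F t in at_top. p t \<noteq> 0"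
  shows "\<exists>c>0. \<forall>\<^sub>F t in at_top. c * \<bar>p t\<bar> \<le> \<bar>h t\<bar>"
proof -
  have "\<exists>c>0. \<forall>\<^sub>F t in at_top. c \<le> \<bar>h t / p t\<bar>"
    using assms(1) unfolding wprec_def
  proof
    assume "\<exists>L>0. ((\<lambda>t. \<bar>h t / p t\<bar>) \<longlongrightarrow> L) at_top"
    then obtain L where L: "L > 0" "((\<lambda>t. \<bar>h t / p t\<bar>) \<longlongrightarrow> L) at_top" by blast
    have "\<forall>\<^sub>F t in at_top. L/2 < \<bar>h t / p t\<bar>"
      using order_tendstoD(1)[OF L(2), of "L/2"] L(1) by simp
    then show ?thesis using L(1) by (intro exI[of _ "L/2"]) (auto elim: eventually_mono)
  next
    assume "filterlim (\<lambda>t. \<bar>h t / p t\<bar>) at_top at_top"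
    then show ?thesis unfolding filterlim_at_top by (intro exI[of _ 1]) auto
  qed
  then obtain c where c: "c > 0" "\<forall>\<^sub>F t in at_top. c \<le> \<bar>h t / p t\<bar>" by blast
  have "\<forall>\<^sub>F t in at_top. c * \<bar>p t\<bar> \<le> \<bar>h t\<bar>"
    using c(2) assms(2) by eventually_elim (simp add: abs_divide le_divide_eq)
  with c(1) show ?thesis by blast
qed

lemma wprec_sprec_trans:
  assumes "wprec u h" "sprec h v" "\<forall>\<^sub>F t in at_top. u t \<noteq> 0"
  shows "sprec u v"
proof -
  obtain c where c: "c > 0" "\<forall>\<^sub>F t in at_top. c * \<bar>u t\<bar> \<le> \<bar>h t\<bar>"
    using wprec_imp_eventually_ge[OF assms(1,3)] by blast
  show ?thesis
    unfolding sprec_def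
  proof (rule Lim_null_comparison)
    show "\<forall>\<^sub>F t in at_top. norm (u t / v t) \<le> \<bar>h t / v t\<bar> / c"
      using c(2)
    proof eventually_elim
      case (elim t)
      have "\<bar>u t\<bar> \<le> \<bar>h t\<bar> / c"
        using elim c(1) by (simp add: pos_le_divide_eq mult.commute)
      then have "\<bar>u t\<bar> / \<bar>v t\<bar> \<le> \<bar>h t\<bar> / c / \<bar>v t\<bar>"
        by (rule divide_right_mono) simp
      then show ?case by (simp add: abs_divide divide_divide_eq_left mult.commute)
    qed
    show "((\<lambda>t. \<bar>h t / v t\<bar> / c) \<longlongrightarrow> 0) at_top"
      using tendsto_divide_zero[OF tendsto_rabs_zero[OF assms(2)[unfolded sprec_def]], of c] by simp
  qed
qed

lemma wprec_antisym:
  assumes "wprec p q" "wprec q p"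
  shows "\<exists>L>0. ((\<lambda>t. \<bar>q t / p t\<bar>) \<longlongrightarrow> L) at_top"
  using assms(1) unfolding wprec_def
proof
  assume "filterlim (\<lambda>t. \<bar>q t / p t\<bar>) at_top at_top"
  then have "((\<lambda>t. inverse \<bar>q t / p t\<bar>) \<longlongrightarrow> 0) at_top"
    by (rule tendsto_inverse_0_at_top)
  then have "((\<lambda>t. \<bar>p t / q t\<bar>) \<longlongrightarrow> 0) at_top"
    by (simp add: abs_divide)
  then have "sprec p q"
    unfolding sprec_def by (rule tendsto_rabs_zero_cancel)
  from sprec_not_wprec[OF this] assms(2) show ?thesis by contradiction
qed

lemma wprec_ratio_tendsto:
  assumes "wprec p h" and lim: "((\<lambda>t. p t / q t) \<longlongrightarrow> A) at_top" and "A > 0"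
    and "\<forall>\<^sub>F t in at_top. p t > 0"
  shows "wprec q h"
proof -
  have eq: "\<forall>\<^sub>F t in at_top. \<bar>h t / p t\<bar> * (p t / q t) = \<bar>h t / q t\<bar>"
    using order_tendstoD(1)[OF lim \<open>A > 0\<close>] assms(4)
    by eventually_elim (auto simp: abs_divide zero_less_divide_iff)
  from assms(1)[unfolded wprec_def] show ?thesis
  proof
    assume "\<exists>L>0. ((\<lambda>t. \<bar>h t / p t\<bar>) \<longlongrightarrow> L) at_top"
    then obtain L where L: "L > 0" "((\<lambda>t. \<bar>h t / p t\<bar>) \<longlongrightarrow> L) at_top" by blast
    have "((\<lambda>t. \<bar>h t / q t\<bar>) \<longlongrightarrow> L * A) at_top"
      using tendsto_mult[OF L(2) lim] eq by (rule Lim_transform_eventually)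
    moreover have "L * A > 0" using L(1) \<open>A > 0\<close> by simp
    ultimately show ?thesis unfolding wprec_def by blast
  next
    assume "filterlim (\<lambda>t. \<bar>h t / p t\<bar>) at_top at_top"
    from filterlim_at_top_mult_tendsto_pos[OF lim \<open>A > 0\<close> this]
    have "filterlim (\<lambda>t. \<bar>h t / q t\<bar>) at_top at_top"
      by (rule filterlim_cong[OF refl refl eq, THEN iffD1])
    then show ?thesis unfolding wprec_def by blast
  qed
qed

lemma sprec_ratio_tendsto:
  assumes "sprec h p" and lim: "((\<lambda>t. p t / q t) \<longlongrightarrow> B) at_top"
    and "\<forall>\<^sub>F t in at_top. p t \<noteq> 0"
  shows "sprec h q"
proof -
  have "\<forall>\<^sub>F t in at_top. (h t / p t) * (p t / q t) = h t / q t"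
    using assms(3) by eventually_elim simp
  moreover have "((\<lambda>t. (h t / p t) * (p t / q t)) \<longlongrightarrow> 0 * B) at_top"
    using assms(1) lim unfolding sprec_def by (rule tendsto_mult)
  ultimately show ?thesis
    unfolding sprec_def by (auto intro: Lim_transform_eventually)
qed

lemma sprec_if_powr_bounds:
  assumes "\<alpha> < \<beta>" "K > 0"
    and "\<forall>\<^sub>F t in at_top. 0 \<le> p t \<and> p t \<le> C * t powr \<alpha>"
    and "\<forall>\<^sub>F t in at_top. K * t powr \<beta> \<le> q t"
  shows "sprec p q"
  unfolding sprec_def
proof (rule Lim_null_comparison)
  show "\<forall>\<^sub>F t in at_top. norm (p t / q t) \<le> C / K * t powr (\<alpha> - \<beta>)"
    using assms(3,4) eventually_gt_at_top[of 0]
  proof eventually_elim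
    case (elim t)
    then have "p t / q t \<le> (C * t powr \<alpha>) / (K * t powr \<beta>)"
      using \<open>K > 0\<close> by (intro frac_le) auto
    also have "\<dots> = C / K * t powr (\<alpha> - \<beta>)"
      by (simp add: powr_diff)
    finally show ?case
      using elim \<open>K > 0\<close> by (simp add: order_trans[OF _ elim(2)])
  qed
  show "((\<lambda>t. C / K * t powr (\<alpha> - \<beta>)) \<longlongrightarrow> 0) at_top"
    using assms(1) by real_asymp
qed

lemma abs_powr_ratio_tendsto:
  fixes F G :: "real \<Rightarrow> real"
  assumes "((\<lambda>t. F t / G t) \<longlongrightarrow> L) at_top" "L \<noteq> 0"
  shows "((\<lambda>t. \<bar>F t\<bar> powr a / \<bar>G t\<bar> powr a) \<longlongrightarrow> \<bar>L\<bar> powr a) at_top"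
proof -
  have "((\<lambda>t. \<bar>F t / G t\<bar> powr a) \<longlongrightarrow> \<bar>L\<bar> powr a) at_top"
    by (rule tendsto_powr[OF tendsto_rabs[OF assms(1)] tendsto_const]) (use assms(2) in simp)
  then show ?thesis by (simp add: abs_divide powr_divide)
qed

lemma sprec_power_left_mono:
  assumes "sprec (\<lambda>t. t ^ n) f" "m \<le> n"
  shows "sprec (\<lambda>t. t ^ m) f"
  unfolding sprec_def
proof (rule Lim_null_comparison)
  show "\<forall>\<^sub>F t in at_top. norm (t ^ m / f t) \<le> \<bar>t ^ n / f t\<bar>"
    using eventually_ge_at_top[of 1]
  proof eventually_elim
    case (elim t)
    then have "t ^ m \<le> t ^ n" using assms(2) by (intro power_increasing)
    with elim show ?case by (simp add: abs_divide divide_right_mono)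
  qed
  show "((\<lambda>t. \<bar>t ^ n / f t\<bar>) \<longlongrightarrow> 0) at_top"
    using assms(1) unfolding sprec_def by (rule tendsto_rabs_zero)
qed

lemma sprec_power_right_mono:
  assumes "sprec f (\<lambda>t. t ^ m)" "m \<le> n"
  shows "sprec f (\<lambda>t. t ^ n)"
  unfolding sprec_def
proof (rule Lim_null_comparison)
  show "\<forall>\<^sub>F t in at_top. norm (f t / t ^ n) \<le> \<bar>f t / t ^ m\<bar>"
    using eventually_ge_at_top[of 1]
  proof eventually_elim
    case (elim t)
    then have "t ^ m \<le> t ^ n" using assms(2) by (intro power_increasing)
    moreover have "0 < t ^ m" using elim by simp
    ultimately have "\<bar>f t\<bar> / t ^ n \<le> \<bar>f t\<bar> / t ^ m"
      by (intro divide_left_mono) auto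
    with elim show ?case by (simp add: abs_divide)
  qed
  show "((\<lambda>t. \<bar>f t / t ^ m\<bar>) \<longlongrightarrow> 0) at_top"
    using assms(1) unfolding sprec_def by (rule tendsto_rabs_zero)
qed

lemma strongly_nonpoly_ratio_power_not_tendsto:
  assumes "strongly_nonpoly f" "c \<noteq> 0"
  shows "\<not> ((\<lambda>t. f t / t ^ m) \<longlongrightarrow> c) at_top"
proof
  assume lim: "((\<lambda>t. f t / t ^ m) \<longlongrightarrow> c) at_top"
  obtain d where d1: "sprec (\<lambda>t. t ^ d) f" and d2: "sprec f (\<lambda>t. t ^ (d + 1))"
    using assms(1) unfolding strongly_nonpoly_def by blast
  show False
  proof (cases "m \<le> d")
    case True
    have "((\<lambda>t. t ^ m / f t) \<longlongrightarrow> inverse c) at_top"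
      using tendsto_inverse[OF lim assms(2)] by simp
    moreover have "((\<lambda>t. t ^ m / f t) \<longlongrightarrow> 0) at_top"
      using sprec_power_left_mono[OF d1 True] unfolding sprec_def .
    ultimately have "inverse c = 0"
      by (rule tendsto_unique[OF trivial_limit_at_top_linorder])
    with assms(2) show False by simp
  next
    case False
    then have "d + 1 \<le> m" by simp
    from sprec_power_right_mono[OF d2 this] have "((\<lambda>t. f t / t ^ m) \<longlongrightarrow> 0) at_top"
      unfolding sprec_def .
    with lim have "c = 0" by (rule tendsto_unique[OF trivial_limit_at_top_linorder])
    with assms(2) show False by simp
  qed
qed

section \<open>Powers\<close>

(* pochhammer (a - j + 1) j is the falling factorial a (a - 1) ... (a - j + 1). *)
lemma hderiv_powr:
  assumes "t > 0"
  shows "hderiv j (\<lambda>t. t powr a) t = pochhammer (a - real j + 1) j * t powr (a - real j)"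
  using assms
proof (induction j arbitrary: t)
  case (Suc j)
  have "((\<lambda>s. pochhammer (a - real j + 1) j * s powr (a - real j)) has_real_derivative
      pochhammer (a - real j + 1) j * ((a - real j) * t powr (a - real j - 1))) (at t)"
    using Suc.prems by (intro DERIV_cmult has_real_derivative_powr)
  then have "(hderiv j (\<lambda>t. t powr a) has_real_derivative
      pochhammer (a - real j + 1) j * ((a - real j) * t powr (a - real j - 1))) (at t)"
    by (rule has_field_derivative_transform_within_open[of _ _ _ "{0<..}"]) (use Suc in auto)
  then show ?case
    by (simp add: hderiv_Suc DERIV_imp_deriv pochhammer_rec[of "a - real j"] algebra_simps)
qed simp

lemma hderiv_powr_eventually:
  "\<forall>\<^sub>F t in at_top. hderiv k (\<lambda>t. t powr a) t = pochhammer (a - real k + 1) k * t powr (a - real k)"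
  using eventually_gt_at_top[of 0] by eventually_elim (rule hderiv_powr)

lemma pochhammer_nonint_nonzero:
  assumes "\<And>i::nat. a \<noteq> real i"
  shows "pochhammer (a - real j + 1) j \<noteq> 0"
proof
  assume "pochhammer (a - real j + 1) j = 0"
  then obtain k where "k < j" "a - real j + 1 = - real k"
    by (auto simp: pochhammer_eq_0_iff)
  then have "a = real (j - Suc k)" by (simp add: of_nat_diff)
  with assms show False by blast
qed

definition hderivs_regular :: "(real \<Rightarrow> real) \<Rightarrow> bool" where
  "hderivs_regular v \<longleftrightarrow> (\<forall>j. (\<forall>\<^sub>F t in at_top. hderiv j v t \<noteq> 0) \<and>
     ((hderiv j v \<longlongrightarrow> 0) at_top \<or> filterlim (\<lambda>t. \<bar>hderiv j v t\<bar>) at_top at_top))"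

lemma hderivs_regular_powr:
  assumes a: "\<And>i::nat. a \<noteq> real i"
  shows "hderivs_regular (\<lambda>t. t powr a)"
  unfolding hderivs_regular_def
proof
  fix j
  define c where "c = pochhammer (a - real j + 1) j"
  have c: "c \<noteq> 0" unfolding c_def by (rule pochhammer_nonint_nonzero[OF a])
  have eq: "\<forall>\<^sub>F t in at_top. hderiv j (\<lambda>t. t powr a) t = c * t powr (a - real j)"
    unfolding c_def by (rule hderiv_powr_eventually)
  show "(\<forall>\<^sub>F t in at_top. hderiv j (\<lambda>t. t powr a) t \<noteq> 0) \<and>
      ((hderiv j (\<lambda>t. t powr a) \<longlongrightarrow> 0) at_top
       \<or> filterlim (\<lambda>t. \<bar>hderiv j (\<lambda>t. t powr a) t\<bar>) at_top at_top)"
  proof (intro conjI)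
    show "\<forall>\<^sub>F t in at_top. hderiv j (\<lambda>t. t powr a) t \<noteq> 0"
      using eq eventually_gt_at_top[of 0] by eventually_elim (use c in simp)
    consider "a - real j < 0" | "a - real j > 0" using a[of j] by fastforce
    then show "(hderiv j (\<lambda>t. t powr a) \<longlongrightarrow> 0) at_top
        \<or> filterlim (\<lambda>t. \<bar>hderiv j (\<lambda>t. t powr a) t\<bar>) at_top at_top"
    proof cases
      case 1
      then have "((\<lambda>t. c * t powr (a - real j)) \<longlongrightarrow> 0) at_top" by real_asymp
      then have "(hderiv j (\<lambda>t. t powr a) \<longlongrightarrow> 0) at_top"
        by (rule Lim_transform_eventually) (rule eventually_mono[OF eq], simp)
      then show ?thesis ..
    next
      case 2
      have "filterlim (\<lambda>t. \<bar>c\<bar> * t powr (a - real j)) at_top at_top"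
        using c 2 by (intro filterlim_tendsto_pos_mult_at_top[OF tendsto_const] real_powr_at_top) auto
      moreover have "\<forall>\<^sub>F t in at_top. \<bar>c\<bar> * t powr (a - real j) \<le> \<bar>hderiv j (\<lambda>t. t powr a) t\<bar>"
        using eq by eventually_elim (simp add: abs_mult)
      ultimately show ?thesis by (blast intro: filterlim_at_top_mono)
    qed
  qed
qed

lemma lless_hderiv_powr_powr: "lless (hderiv k (\<lambda>t. t powr a)) (\<lambda>t. t powr (a - real k))"
proof -
  have "\<forall>\<^sub>F t in at_top. \<bar>hderiv k (\<lambda>t. t powr a) t\<bar>
      \<le> \<bar>pochhammer (a - real k + 1) k\<bar> * \<bar>t powr (a - real k)\<bar>"
    using hderiv_powr_eventually[of k a] by eventually_elim (simp add: abs_mult)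
  then show ?thesis unfolding lless_def by blast
qed

lemma lless_powr_hderiv_powr:
  assumes "\<And>i::nat. a \<noteq> real i"
  shows "lless (\<lambda>t. t powr (a - real k)) (hderiv k (\<lambda>t. t powr a))"
proof -
  define c where "c = pochhammer (a - real k + 1) k"
  have "c \<noteq> 0" unfolding c_def by (rule pochhammer_nonint_nonzero[OF assms])
  have "\<forall>\<^sub>F t in at_top. \<bar>t powr (a - real k)\<bar> \<le> (1 / \<bar>c\<bar>) * \<bar>hderiv k (\<lambda>t. t powr a) t\<bar>"
    using hderiv_powr_eventually[of k a] by eventually_elim (use \<open>c \<noteq> 0\<close> in \<open>simp add: c_def abs_mult\<close>)
  then show ?thesis unfolding lless_def by blast
qed

lemma half_odd_neq_nat: "real D + 3/2 \<noteq> real (i::nat)"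
proof
  assume "real D + 3/2 = real i"
  then have "real (2 * i) = real (2 * D + 3)" by simp
  then have "2 * i = 2 * D + 3" by (simp only: of_nat_eq_iff)
  then show False by presburger
qed

lemma powr_neg_root_mult_powr:
  assumes "c > 0" "t > 0" "k > 0"
  shows "(c * t powr (e - real k)) powr (- 1 / real k) = c powr (- 1 / real k) * t powr (1 - e / real k)"
proof -
  have "(e - real k) * (- 1 / real k) = 1 - e / real k"
    using assms(3) by (simp add: field_simps)
  with assms(1,2) show ?thesis by (simp add: powr_mult powr_powr)
qed

lemma powr_neg_root_le_if_ge:
  assumes "k > 0" "t > 0" "c > 0" "c * t powr (e - real k) \<le> X"
  shows "X powr (- 1 / real k) \<le> c powr (- 1 / real k) * t powr (1 - e / real k)"
proof -
  have "X powr (- 1 / real k) \<le> (c * t powr (e - real k)) powr (- 1 / real k)"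
    using assms by (intro powr_mono2') auto
  also have "\<dots> = c powr (- 1 / real k) * t powr (1 - e / real k)"
    using assms by (intro powr_neg_root_mult_powr) auto
  finally show ?thesis .
qed

lemma powr_neg_root_ge_if_le:
  assumes "k > 0" "t > 0" "X > 0" "X \<le> C * t powr (e - real k)"
  shows "C powr (- 1 / real k) * t powr (1 - e / real k) \<le> X powr (- 1 / real k)"
proof -
  have "C > 0"
  proof (rule ccontr)
    assume "\<not> C > 0"
    then have "C * t powr (e - real k) \<le> 0" by (intro mult_nonpos_nonneg) auto
    with assms(3,4) show False by linarith
  qed
  then have "C powr (- 1 / real k) * t powr (1 - e / real k) = (C * t powr (e - real k)) powr (- 1 / real k)"
    using assms by (intro powr_neg_root_mult_powr[symmetric]) auto
  also have "\<dots> \<le> X powr (- 1 / real k)"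
    using assms by (intro powr_mono2') auto
  finally show ?thesis .
qed

lemma abs_ln_le_if_powr_le:
  fixes X t c e :: real
  assumes X: "0 < X" "X < 1" and "1 < t" "c > 0" "e > 0"
    and low: "c * t powr (e - real k) \<le> X"
  shows "\<bar>ln X\<bar> \<le> - ln c + real k * ln t"
proof -
  have "ln c + (e - real k) * ln t = ln (c * t powr (e - real k))"
    using assms by (simp add: ln_mult)
  also have "\<dots> \<le> ln X"
    using low assms by simp
  finally have "ln c + (e - real k) * ln t \<le> ln X" .
  moreover have "- real k * ln t \<le> (e - real k) * ln t"
    using assms by (intro mult_right_mono) auto
  moreover have "ln X < 0" using X by simp
  ultimately show ?thesis by linarith
qed

lemma root_quotient_powr_eq:
  fixes X Y :: real
  assumes "X > 0" "Y > 0" "k > 0"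
  shows "(X powr (- 1 / real k) / Y powr (- 1 / real (Suc k))) powr (real k * real (Suc k))
    = Y ^ k / X ^ Suc k"
proof -
  have "- 1 / real k * (real k * real (Suc k)) = - real (Suc k)"
    "- 1 / real (Suc k) * (real k * real (Suc k)) = - real k"
    using assms(3) by (simp_all add: field_simps)
  then have "(X powr (- 1 / real k) / Y powr (- 1 / real (Suc k))) powr (real k * real (Suc k))
      = X powr (- real (Suc k)) / Y powr (- real k)"
    by (simp add: powr_divide powr_powr)
  also have "\<dots> = Y ^ k / X ^ Suc k"
    by (simp only: powr_minus_divide powr_realpow[OF assms(1)] powr_realpow[OF assms(2)]) simp
  finally show ?thesis .
qed

lemma power_quotient_le_powr:
  fixes X Y t B c e :: real
  assumes X: "X > 0" and Y: "Y > 0" and t: "t > 0"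
    and der: "t * Y \<le> B * X" and c: "c > 0" and low: "c * t powr (e - real k) \<le> X"
  shows "Y ^ k / X ^ Suc k \<le> \<bar>B\<bar> ^ k / c * t powr (- e)"
proof -
  have "Y ^ k / X ^ Suc k = (Y / X) ^ k / X"
    by (simp add: power_divide)
  also have "\<dots> \<le> (\<bar>B\<bar> / t) ^ k / X"
  proof -
    have "t * Y \<le> \<bar>B\<bar> * X"
      using der mult_right_mono[OF abs_ge_self[of B], of X] X by linarith
    then have "Y / X \<le> \<bar>B\<bar> / t"
      using X t by (simp add: field_simps)
    then show ?thesis using X Y by (intro divide_right_mono power_mono) auto
  qed
  also have "\<dots> = \<bar>B\<bar> ^ k / (t ^ k * X)"
    by (simp add: power_divide)
  also have "\<dots> \<le> \<bar>B\<bar> ^ k / (t ^ k * (c * t powr (e - real k)))"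
  proof (rule divide_left_mono)
    show "t ^ k * (c * t powr (e - real k)) \<le> t ^ k * X"
      using low t by (intro mult_left_mono) auto
    show "0 < t ^ k * X * (t ^ k * (c * t powr (e - real k)))"
      using X t c by simp
  qed simp
  also have "t ^ k * (c * t powr (e - real k)) = c * t powr e"
  proof -
    have "t ^ k * t powr (e - real k) = t powr real k * t powr (e - real k)"
      using t by (simp add: powr_realpow)
    also have "\<dots> = t powr e"
      by (simp add: powr_add[symmetric])
    finally show ?thesis by (simp add: mult_ac)
  qed
  also have "\<bar>B\<bar> ^ k / (c * t powr e) = \<bar>B\<bar> ^ k / c * t powr (- e)"
    by (simp add: powr_minus_divide)
  finally show ?thesis .
qed

lemma root_quotient_powr_eq_abs_divide:
  fixes F G :: real
  assumes "F \<noteq> 0" "G \<noteq> 0" "k > 0"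
  shows "\<bar>\<bar>F\<bar> powr (- 1 / real k) / \<bar>G\<bar> powr (- 1 / real k)\<bar> powr (- real k) = \<bar>F / G\<bar>"
proof -
  have "\<bar>\<bar>F\<bar> powr (- 1 / real k) / \<bar>G\<bar> powr (- 1 / real k)\<bar> = \<bar>F / G\<bar> powr (- 1 / real k)"
    by (simp add: powr_divide abs_divide)
  moreover have "- 1 / real k * - real k = 1" using assms(3) by simp
  ultimately show ?thesis using assms by (simp add: powr_powr)
qed

section \<open>Hardy fields\<close>

locale good_hardy =
  fixes H :: "(real \<Rightarrow> real) set"
  assumes good: "good_hardy_field H"
begin

lemma hardy_field: "hardy_field H"
  using good by (simp add: good_hardy_field_def)

lemma mem_cong: "f \<in> H \<Longrightarrow> \<forall>\<^sub>F x in at_top. f x = g x \<Longrightarrow> g \<in> H"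
  using hardy_field unfolding hardy_field_def by blast

lemma le_fun_mem: "le_fun f \<Longrightarrow> f \<in> H"
  using good unfolding good_hardy_field_def by blast

lemma const_mem: "(\<lambda>_. c) \<in> H"
  by (rule le_fun_mem) (rule le_const)

lemma ident_mem: "(\<lambda>x. x) \<in> H"
  by (rule le_fun_mem) (rule le_ident)

lemma add_mem: "f \<in> H \<Longrightarrow> g \<in> H \<Longrightarrow> (\<lambda>x. f x + g x) \<in> H"
  using hardy_field unfolding hardy_field_def by blast

lemma uminus_mem: "f \<in> H \<Longrightarrow> (\<lambda>x. - f x) \<in> H"
  using hardy_field unfolding hardy_field_def by blast

lemma mult_mem: "f \<in> H \<Longrightarrow> g \<in> H \<Longrightarrow> (\<lambda>x. f x * g x) \<in> H"
  using hardy_field unfolding hardy_field_def by blast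

lemma diff_mem: "f \<in> H \<Longrightarrow> g \<in> H \<Longrightarrow> (\<lambda>x. f x - g x) \<in> H"
  using add_mem[of f "\<lambda>x. - g x"] uminus_mem[of g] by simp

lemma cmult_mem: "f \<in> H \<Longrightarrow> (\<lambda>x. c * f x) \<in> H"
  using mult_mem[OF const_mem] by blast

lemma deriv_mem: "f \<in> H \<Longrightarrow> deriv f \<in> H"
  using hardy_field unfolding hardy_field_def by blast

lemma hderiv_mem: "f \<in> H \<Longrightarrow> hderiv k f \<in> H"
  by (induction k) (auto simp: hderiv_Suc deriv_mem)

lemma eventually_DERIV: "f \<in> H \<Longrightarrow> \<forall>\<^sub>F x in at_top. DERIV f x :> deriv f x"
  using hardy_field unfolding hardy_field_def
  by (auto elim!: eventually_mono simp: DERIV_deriv_iff_real_differentiable)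

lemma eventually_DERIV_hderiv:
  "f \<in> H \<Longrightarrow> \<forall>\<^sub>F t in at_top. DERIV (hderiv j f) t :> hderiv (Suc j) f t"
  using eventually_DERIV[OF hderiv_mem] by (simp add: hderiv_Suc)

lemma compose_mem: "f \<in> H \<Longrightarrow> g \<in> H \<Longrightarrow> filterlim g at_top at_top \<Longrightarrow> (\<lambda>x. f (g x)) \<in> H"
  using good unfolding good_hardy_field_def by blast

lemma inverse_mem:
  assumes "f \<in> H" "\<forall>\<^sub>F x in at_top. f x \<noteq> 0"
  shows "(\<lambda>x. 1 / f x) \<in> H"
proof -
  have "\<not> (\<forall>\<^sub>F x in at_top. f x = 0)"
  proof
    assume "\<forall>\<^sub>F x in at_top. f x = 0"
    with assms(2) have "eventually (\<lambda>_::real. False) at_top" by eventually_elim simp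
    then show False by simp
  qed
  with assms(1) hardy_field obtain h where "h \<in> H" "\<forall>\<^sub>F x in at_top. f x * h x = 1"
    unfolding hardy_field_def by blast
  from this(2) have "\<forall>\<^sub>F x in at_top. h x = 1 / f x"
    by eventually_elim (auto simp: eq_divide_eq mult_ac)
  with \<open>h \<in> H\<close> show ?thesis by (rule mem_cong)
qed

lemma divide_mem:
  assumes "f \<in> H" "g \<in> H" "\<forall>\<^sub>F x in at_top. g x \<noteq> 0"
  shows "(\<lambda>x. f x / g x) \<in> H"
  using mult_mem[OF assms(1) inverse_mem[OF assms(2,3)]] by simp

lemma powr_mem:
  assumes "g \<in> H" "filterlim g at_top at_top"
  shows "(\<lambda>x. g x powr a) \<in> H"
proof -
  have "le_fun (\<lambda>x. exp (a * ln x))"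
    by (intro le_exp le_mult le_const le_ln le_ident) (simp add: eventually_gt_at_top)
  from compose_mem[OF le_fun_mem[OF this] assms] have "(\<lambda>x. exp (a * ln (g x))) \<in> H" .
  moreover have "\<forall>\<^sub>F x in at_top. g x > 0"
    using assms(2) unfolding filterlim_at_top_dense by blast
  then have "\<forall>\<^sub>F x in at_top. exp (a * ln (g x)) = g x powr a"
    by eventually_elim (simp add: powr_def)
  ultimately show ?thesis by (rule mem_cong)
qed

lemma eventually_zero_or_nonzero:
  assumes "f \<in> H"
  shows "(\<forall>\<^sub>F x in at_top. f x = 0) \<or> (\<forall>\<^sub>F x in at_top. f x \<noteq> 0)"
proof -
  from assms hardy_field consider "\<forall>\<^sub>F x in at_top. f x = 0" | h where "\<forall>\<^sub>F x in at_top. f x * h x = 1"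
    unfolding hardy_field_def by blast
  then show ?thesis
  proof cases
    case 2
    then have "\<forall>\<^sub>F x in at_top. f x \<noteq> 0" by eventually_elim auto
    then show ?thesis ..
  qed simp
qed

lemma eventually_pos_or_neg:
  assumes "f \<in> H" "\<forall>\<^sub>F x in at_top. f x \<noteq> 0"
  shows "(\<forall>\<^sub>F x in at_top. f x > 0) \<or> (\<forall>\<^sub>F x in at_top. f x < 0)"
proof -
  have "\<forall>\<^sub>F x in at_top. f x \<noteq> 0 \<and> isCont f x"
    using assms(2) eventually_DERIV[OF assms(1)] by eventually_elim (simp add: DERIV_isCont)
  then obtain a where a: "\<And>x. x \<ge> a \<Longrightarrow> f x \<noteq> 0 \<and> isCont f x"
    unfolding eventually_at_top_linorder by blast
  have same_sign: "0 < f a * f b" if ab: "a \<le> b" for b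
  proof (rule ccontr)
    assume "\<not> 0 < f a * f b"
    with a[of a] a[OF ab] consider "f a < 0" "0 < f b" | "f b < 0" "0 < f a"
      by (fastforce simp: zero_less_mult_iff not_less)
    moreover have cont: "\<forall>x. a \<le> x \<and> x \<le> b \<longrightarrow> isCont f x" using a by auto
    ultimately have "\<exists>x. a \<le> x \<and> x \<le> b \<and> f x = 0"
    proof cases
      case 1
      then show ?thesis using IVT[of f a 0 b, OF _ _ ab cont] by simp
    next
      case 2
      then show ?thesis using IVT2[of f b 0 a, OF _ _ ab cont] by simp
    qed
    with a show False by blast
  qed
  show ?thesis
  proof (cases "f a > 0")
    case True
    with same_sign have "\<forall>b\<ge>a. f b > 0" by (auto simp: zero_less_mult_iff)
    then show ?thesis unfolding eventually_at_top_linorder by blast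
  next
    case False
    with same_sign have "\<forall>b\<ge>a. f b < 0" by (auto simp: zero_less_mult_iff)
    then show ?thesis unfolding eventually_at_top_linorder by blast
  qed
qed

lemma eventually_sign:
  assumes "f \<in> H"
  obtains "\<forall>\<^sub>F x in at_top. f x = 0" | "\<forall>\<^sub>F x in at_top. f x > 0" | "\<forall>\<^sub>F x in at_top. f x < 0"
  using eventually_zero_or_nonzero[OF assms] eventually_pos_or_neg[OF assms] by blast

lemma abs_mem:
  assumes "f \<in> H"
  shows "(\<lambda>x. \<bar>f x\<bar>) \<in> H"
proof (cases rule: eventually_sign[OF assms])
  case 3
  then have "\<forall>\<^sub>F x in at_top. - f x = \<bar>f x\<bar>" by eventually_elim simp
  then show ?thesis by (rule mem_cong[OF uminus_mem[OF assms]])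
qed (auto intro: mem_cong[OF assms] elim!: eventually_mono)

lemma eventually_nonneg_or_nonpos:
  assumes "f \<in> H"
  shows "(\<forall>\<^sub>F x in at_top. f x \<ge> 0) \<or> (\<forall>\<^sub>F x in at_top. f x \<le> 0)"
proof (cases rule: eventually_sign[OF assms])
  case 1
  then have "\<forall>\<^sub>F x in at_top. f x \<ge> 0" by eventually_elim simp
  then show ?thesis ..
next
  case 2
  then have "\<forall>\<^sub>F x in at_top. f x \<ge> 0" by eventually_elim simp
  then show ?thesis ..
next
  case 3
  then have "\<forall>\<^sub>F x in at_top. f x \<le> 0" by eventually_elim simp
  then show ?thesis ..
qed

lemma tendsto_or_abs_at_top:
  assumes "f \<in> H"
  shows "(\<exists>c. (f \<longlongrightarrow> c) at_top) \<or> filterlim (\<lambda>x. \<bar>f x\<bar>) at_top at_top"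
  using eventually_nonneg_or_nonpos[OF deriv_mem[OF assms]]
proof
  assume "\<forall>\<^sub>F x in at_top. deriv f x \<ge> 0"
  with eventually_DERIV[OF assms]
  have "\<forall>\<^sub>F x in at_top. DERIV f x :> deriv f x \<and> deriv f x \<ge> 0" by eventually_elim simp
  from tendsto_or_at_top_if_deriv_nonneg[OF this] show ?thesis
    using filterlim_compose[OF filterlim_abs_real, of f at_top] by blast
next
  assume "\<forall>\<^sub>F x in at_top. deriv f x \<le> 0"
  with eventually_DERIV[OF assms]
  have "\<forall>\<^sub>F x in at_top. DERIV (\<lambda>x. - f x) x :> - deriv f x \<and> - deriv f x \<ge> 0"
    by eventually_elim (simp add: DERIV_minus)
  from tendsto_or_at_top_if_deriv_nonneg[OF this] show ?thesis
  proof
    assume "\<exists>c. ((\<lambda>x. - f x) \<longlongrightarrow> c) at_top"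
    then obtain c where "((\<lambda>x. - f x) \<longlongrightarrow> c) at_top" by blast
    from tendsto_minus[OF this] show ?thesis by auto
  next
    assume "filterlim (\<lambda>x. - f x) at_top at_top"
    from filterlim_compose[OF filterlim_abs_real this] show ?thesis by simp
  qed
qed

lemma sprec_or_wprec:
  assumes "u \<in> H" "v \<in> H" "\<forall>\<^sub>F x in at_top. v x \<noteq> 0"
  shows "sprec u v \<or> wprec v u"
proof -
  from tendsto_or_abs_at_top[OF divide_mem[OF assms]] show ?thesis
  proof
    assume "\<exists>c. ((\<lambda>x. u x / v x) \<longlongrightarrow> c) at_top"
    then obtain c where c: "((\<lambda>x. u x / v x) \<longlongrightarrow> c) at_top" by blast
    show ?thesis
    proof (cases "c = 0")
      case False
      with tendsto_rabs[OF c] have "\<exists>L>0. ((\<lambda>t. \<bar>u t / v t\<bar>) \<longlongrightarrow> L) at_top"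
        by (intro exI[of _ "\<bar>c\<bar>"]) simp
      then show ?thesis unfolding wprec_def by blast
    qed (use c in \<open>simp add: sprec_def\<close>)
  qed (simp add: wprec_def)
qed

lemma abs_deriv_ge_imp_abs_ge_lless:
  assumes u: "u \<in> H" and v: "v \<in> H" and v'_nz: "\<forall>\<^sub>F x in at_top. deriv v x \<noteq> 0"
    and v_lim: "(v \<longlongrightarrow> 0) at_top \<or> filterlim (\<lambda>x. \<bar>v x\<bar>) at_top at_top"
    and "lless u v" "M > 0"
    and "\<forall>\<^sub>F x in at_top. M * \<bar>deriv v x\<bar> \<le> \<bar>deriv u x\<bar>"
  shows "\<forall>\<^sub>F x in at_top. M/2 * \<bar>v x\<bar> \<le> \<bar>u x\<bar>"
proof (rule abs_deriv_ge_imp_abs_ge)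
  show "\<forall>\<^sub>F x in at_top. DERIV u x :> deriv u x \<and> DERIV v x :> deriv v x \<and> deriv v x \<noteq> 0
      \<and> M * \<bar>deriv v x\<bar> \<le> \<bar>deriv u x\<bar>"
    using eventually_DERIV[OF u] eventually_DERIV[OF v] v'_nz assms(7) by eventually_elim simp
  show "filterlim (\<lambda>x. \<bar>v x\<bar>) at_top at_top \<or> (u \<longlongrightarrow> 0) at_top \<and> (v \<longlongrightarrow> 0) at_top"
    using v_lim lless_tendsto_0[OF \<open>lless u v\<close>] by blast
qed fact

lemma lless_deriv:
  assumes u: "u \<in> H" and v: "v \<in> H" and v_nz: "\<forall>\<^sub>F x in at_top. v x \<noteq> 0"
    and v'_nz: "\<forall>\<^sub>F x in at_top. deriv v x \<noteq> 0"
    and v_lim: "(v \<longlongrightarrow> 0) at_top \<or> filterlim (\<lambda>x. \<bar>v x\<bar>) at_top at_top"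
    and "lless u v"
  shows "lless (deriv u) (deriv v)"
proof -
  obtain C where C: "\<forall>\<^sub>F t in at_top. \<bar>u t\<bar> \<le> C * \<bar>v t\<bar>"
    using \<open>lless u v\<close> unfolding lless_def by blast
  from tendsto_or_abs_at_top[OF divide_mem[OF deriv_mem[OF u] deriv_mem[OF v] v'_nz]] show ?thesis
  proof
    assume "\<exists>c. ((\<lambda>x. deriv u x / deriv v x) \<longlongrightarrow> c) at_top"
    then obtain c where "((\<lambda>x. deriv u x / deriv v x) \<longlongrightarrow> c) at_top" by blast
    from order_tendstoD(2)[OF tendsto_rabs[OF this] less_add_one] v'_nz
    have "\<forall>\<^sub>F x in at_top. \<bar>deriv u x\<bar> \<le> (\<bar>c\<bar> + 1) * \<bar>deriv v x\<bar>"
      by eventually_elim (simp add: abs_divide divide_less_eq)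
    then show ?thesis unfolding lless_def by blast
  next
    assume "filterlim (\<lambda>x. \<bar>deriv u x / deriv v x\<bar>) at_top at_top"
    then have "\<forall>\<^sub>F x in at_top. 2 * (\<bar>C\<bar> + 1) \<le> \<bar>deriv u x / deriv v x\<bar>"
      unfolding filterlim_at_top by blast
    with v'_nz have "\<forall>\<^sub>F x in at_top. 2 * (\<bar>C\<bar> + 1) * \<bar>deriv v x\<bar> \<le> \<bar>deriv u x\<bar>"
      by eventually_elim (simp add: abs_divide le_divide_eq)
    moreover have "2 * (\<bar>C\<bar> + 1) > 0" by (simp add: add_pos_nonneg)
    ultimately have "\<forall>\<^sub>F x in at_top. 2 * (\<bar>C\<bar> + 1) / 2 * \<bar>v x\<bar> \<le> \<bar>u x\<bar>"
      by (intro abs_deriv_ge_imp_abs_ge_lless[OF u v v'_nz v_lim \<open>lless u v\<close>])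
    then have "\<forall>\<^sub>F x in at_top. (\<bar>C\<bar> + 1) * \<bar>v x\<bar> \<le> \<bar>u x\<bar>"
      by eventually_elim (simp add: algebra_simps)
    with C v_nz have "eventually (\<lambda>_::real. False) at_top"
    proof eventually_elim
      case (elim x)
      have "C * \<bar>v x\<bar> \<le> \<bar>C\<bar> * \<bar>v x\<bar>" by (simp add: mult_right_mono)
      with elim show False by (simp add: distrib_right)
    qed
    then show ?thesis by simp
  qed
qed

lemma sprec_deriv:
  assumes u: "u \<in> H" and v: "v \<in> H" and v_nz: "\<forall>\<^sub>F x in at_top. v x \<noteq> 0"
    and v'_nz: "\<forall>\<^sub>F x in at_top. deriv v x \<noteq> 0"
    and v_lim: "(v \<longlongrightarrow> 0) at_top \<or> filterlim (\<lambda>x. \<bar>v x\<bar>) at_top at_top"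
    and "sprec u v"
  shows "sprec (deriv u) (deriv v)"
proof -
  have no_lower: "\<not> (\<forall>\<^sub>F x in at_top. M * \<bar>deriv v x\<bar> \<le> \<bar>deriv u x\<bar>)" if "M > 0" for M
  proof
    assume "\<forall>\<^sub>F x in at_top. M * \<bar>deriv v x\<bar> \<le> \<bar>deriv u x\<bar>"
    from abs_deriv_ge_imp_abs_ge_lless[OF u v v'_nz v_lim sprec_imp_lless[OF \<open>sprec u v\<close> v_nz]
        \<open>M > 0\<close> this]
    show False using sprec_not_eventually_ge[OF \<open>sprec u v\<close> v_nz, of "M/2"] \<open>M > 0\<close> by simp
  qed
  from tendsto_or_abs_at_top[OF divide_mem[OF deriv_mem[OF u] deriv_mem[OF v] v'_nz]] show ?thesis
  proof
    assume "\<exists>c. ((\<lambda>x. deriv u x / deriv v x) \<longlongrightarrow> c) at_top"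
    then obtain c where c: "((\<lambda>x. deriv u x / deriv v x) \<longlongrightarrow> c) at_top" by blast
    have "c = 0"
    proof (rule ccontr)
      assume "c \<noteq> 0"
      then have "\<bar>c\<bar>/2 < \<bar>c\<bar>" by simp
      from order_tendstoD(1)[OF tendsto_rabs[OF c] this] v'_nz
      have "\<forall>\<^sub>F x in at_top. \<bar>c\<bar>/2 * \<bar>deriv v x\<bar> \<le> \<bar>deriv u x\<bar>"
        by eventually_elim (simp add: abs_divide less_divide_eq)
      with no_lower[of "\<bar>c\<bar>/2"] \<open>c \<noteq> 0\<close> show False by simp
    qed
    with c show ?thesis unfolding sprec_def by simp
  next
    assume "filterlim (\<lambda>x. \<bar>deriv u x / deriv v x\<bar>) at_top at_top"
    then have "\<forall>\<^sub>F x in at_top. 1 \<le> \<bar>deriv u x / deriv v x\<bar>"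
      unfolding filterlim_at_top by blast
    with v'_nz have "\<forall>\<^sub>F x in at_top. 1 * \<bar>deriv v x\<bar> \<le> \<bar>deriv u x\<bar>"
      by eventually_elim (simp add: abs_divide le_divide_eq)
    with no_lower[of 1] show ?thesis by simp
  qed
qed

lemma lless_hderiv:
  assumes p: "p \<in> H" and v: "v \<in> H" and reg: "hderivs_regular v" and "lless p v"
  shows "lless (hderiv k p) (hderiv k v)"
proof (induction k)
  case (Suc k)
  have "lless (deriv (hderiv k p)) (deriv (hderiv k v))"
    using reg[unfolded hderivs_regular_def, rule_format, of k]
      reg[unfolded hderivs_regular_def, rule_format, of "Suc k"]
    by (intro lless_deriv[OF hderiv_mem[OF p] hderiv_mem[OF v] _ _ _ Suc]) (simp_all add: hderiv_Suc)
  then show ?case by (simp add: hderiv_Suc)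
qed (simp add: \<open>lless p v\<close>)

lemma ratio_power_tendsto_if_hderiv_tendsto:
  assumes "u \<in> H" "(hderiv m u \<longlongrightarrow> c) at_top"
  shows "((\<lambda>t. u t / t ^ m) \<longlongrightarrow> c / fact m) at_top"
  using assms
proof (induction m arbitrary: u)
  case (Suc m)
  have "((\<lambda>t. deriv u t / t ^ m) \<longlongrightarrow> c / fact m) at_top"
    using Suc.prems by (intro Suc.IH deriv_mem) (simp_all add: hderiv_Suc')
  then have "((\<lambda>t. deriv u t / t ^ m / real (Suc m)) \<longlongrightarrow> c / fact m / real (Suc m)) at_top"
    by (rule tendsto_divide[OF _ tendsto_const]) simp
  then have "((\<lambda>t. deriv u t / (real (Suc m) * t ^ m)) \<longlongrightarrow> c / fact m / real (Suc m)) at_top"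
    by (simp add: divide_divide_eq_left mult.commute)
  then have "((\<lambda>t. u t / t ^ Suc m) \<longlongrightarrow> c / fact m / real (Suc m)) at_top"
  proof (rule lhospital_at_top_at_top[rotated 4])
    show "filterlim (\<lambda>t::real. t ^ Suc m) at_top at_top"
      by (rule filterlim_pow_at_top[OF _ filterlim_ident]) simp
    show "\<forall>\<^sub>F t in at_top. real (Suc m) * t ^ m \<noteq> 0"
      using eventually_gt_at_top[of 0] by eventually_elim simp
    show "\<forall>\<^sub>F t in at_top. DERIV u t :> deriv u t"
      by (rule eventually_DERIV[OF Suc.prems(1)])
    show "\<forall>\<^sub>F t in at_top. DERIV (\<lambda>t. t ^ Suc m) t :> real (Suc m) * t ^ m"
      using DERIV_pow[of "Suc m"] by simp
  qed
  then show ?case by (simp add: divide_divide_eq_left mult.commute)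
qed simp

lemma eventually_sign_mult_pos:
  assumes "f \<in> H" "\<forall>\<^sub>F x in at_top. f x \<noteq> 0"
  obtains s where "\<bar>s\<bar> = 1" "\<forall>\<^sub>F x in at_top. s * f x > 0"
  using eventually_pos_or_neg[OF assms]
proof
  assume "\<forall>\<^sub>F x in at_top. f x > 0"
  then show thesis using that[of 1] by simp
next
  assume "\<forall>\<^sub>F x in at_top. f x < 0"
  then show thesis using that[of "-1"] by simp
qed

lemma ln_abs_ge_if_log_deriv_unbounded:
  assumes u: "u \<in> H" and u_nz: "\<forall>\<^sub>F t in at_top. u t \<noteq> 0"
    and unbounded: "filterlim (\<lambda>t. \<bar>t * deriv u t / u t\<bar>) at_top at_top" and "M > 0"
  shows "\<forall>\<^sub>F t in at_top. M * ln t \<le> \<bar>ln \<bar>u t\<bar>\<bar>"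
proof -
  obtain s :: real where s: "\<bar>s\<bar> = 1" "\<forall>\<^sub>F t in at_top. s * u t > 0"
    using eventually_sign_mult_pos[OF u u_nz] by blast
  have "\<forall>\<^sub>F t in at_top. 2 * M / 2 * \<bar>ln t\<bar> \<le> \<bar>ln (s * u t)\<bar>"
  proof (rule abs_deriv_ge_imp_abs_ge_unbounded)
    show "filterlim (\<lambda>t::real. \<bar>ln t\<bar>) at_top at_top"
      by (rule filterlim_compose[OF filterlim_abs_real ln_at_top])
    have "\<forall>\<^sub>F t in at_top. 2 * M \<le> \<bar>t * deriv u t / u t\<bar>"
      using unbounded unfolding filterlim_at_top by blast
    then show "\<forall>\<^sub>F t in at_top. DERIV (\<lambda>t. ln (s * u t)) t :> deriv u t / u t \<and> DERIV ln t :> 1 / t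
        \<and> 1 / t \<noteq> 0 \<and> 2 * M * \<bar>1 / t\<bar> \<le> \<bar>deriv u t / u t\<bar>"
      using eventually_DERIV[OF u] s(2) eventually_gt_at_top[of 0]
    proof eventually_elim
      case (elim t)
      have "DERIV (\<lambda>t. ln (s * u t)) t :> 1 / (s * u t) * (s * deriv u t)"
        using elim(3) by (intro DERIV_chain2[OF DERIV_ln_divide DERIV_cmult[OF elim(2)]])
      moreover have "1 / (s * u t) * (s * deriv u t) = deriv u t / u t"
        using s(1) elim(3) by (auto simp: abs_if split: if_splits)
      moreover have "2 * M * \<bar>1 / t\<bar> \<le> \<bar>deriv u t / u t\<bar>"
        using elim(1,4) by (simp add: abs_mult abs_divide field_simps)
      ultimately show ?case using elim(4) by (simp add: DERIV_ln_divide)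
    qed
  qed (use \<open>M > 0\<close> in simp)
  moreover have "\<forall>\<^sub>F t in at_top. s * u t = \<bar>u t\<bar> \<and> ln t > 0"
    using s(2) eventually_gt_at_top[of 1]
  proof eventually_elim
    case (elim t)
    have "s * u t = \<bar>s * u t\<bar>" using elim(1) by simp
    also have "\<dots> = \<bar>u t\<bar>" using s(1) by (simp add: abs_mult)
    finally show ?case using elim(2) by simp
  qed
  ultimately show ?thesis by eventually_elim simp
qed

lemma lhospital_abs_at_top:
  assumes v: "v \<in> H" and v_inf: "filterlim (\<lambda>t. \<bar>v t\<bar>) at_top at_top"
    and v'_nz: "\<forall>\<^sub>F t in at_top. v' t \<noteq> 0"
    and Du: "\<forall>\<^sub>F t in at_top. DERIV u t :> u' t" and Dv: "\<forall>\<^sub>F t in at_top. DERIV v t :> v' t"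
    and lim: "((\<lambda>t. u' t / v' t) \<longlongrightarrow> c) at_top"
  shows "((\<lambda>t. u t / v t) \<longlongrightarrow> c) at_top"
proof -
  have "\<forall>\<^sub>F t in at_top. 1 \<le> \<bar>v t\<bar>"
    using v_inf unfolding filterlim_at_top by blast
  then have "\<forall>\<^sub>F t in at_top. v t \<noteq> 0" by eventually_elim auto
  from eventually_pos_or_neg[OF v this] show ?thesis
  proof
    assume "\<forall>\<^sub>F t in at_top. v t > 0"
    then have "\<forall>\<^sub>F t in at_top. \<bar>v t\<bar> \<le> v t" by eventually_elim simp
    with v_inf have "filterlim v at_top at_top" by (rule filterlim_at_top_mono)
    then show ?thesis by (rule lhospital_at_top_at_top[OF _ v'_nz Du Dv lim])
  next
    assume "\<forall>\<^sub>F t in at_top. v t < 0"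
    then have "\<forall>\<^sub>F t in at_top. \<bar>v t\<bar> \<le> - v t" by eventually_elim simp
    with v_inf have "filterlim (\<lambda>t. - v t) at_top at_top" by (rule filterlim_at_top_mono)
    then have "((\<lambda>t. - u t / - v t) \<longlongrightarrow> c) at_top"
    proof (rule lhospital_at_top_at_top)
      show "\<forall>\<^sub>F t in at_top. - v' t \<noteq> 0" using v'_nz by eventually_elim simp
      show "\<forall>\<^sub>F t in at_top. DERIV (\<lambda>t. - u t) t :> - u' t"
        using Du by eventually_elim (rule DERIV_minus)
      show "\<forall>\<^sub>F t in at_top. DERIV (\<lambda>t. - v t) t :> - v' t"
        using Dv by eventually_elim (rule DERIV_minus)
      show "((\<lambda>t. - u' t / - v' t) \<longlongrightarrow> c) at_top" using lim by simp
    qed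
    then show ?thesis by simp
  qed
qed

end

section \<open>Strongly non-polynomial germs\<close>

(* \<delta> < 1 keeps \<delta> non-integral, so that no derivative of t powr \<delta> vanishes. *)

locale strongly_nonpoly_hardy = good_hardy +
  fixes f :: "real \<Rightarrow> real" and \<delta> :: real
  assumes mem: "f \<in> H" and nonpoly: "strongly_nonpoly f"
    and \<delta>_pos: "0 < \<delta>" and \<delta>_less_1: "\<delta> < 1"
    and powr_lless: "lless (\<lambda>t. t powr \<delta>) f"
begin

lemma abs_at_top: "filterlim (\<lambda>t. \<bar>f t\<bar>) at_top at_top"
  using powr_lless filterlim_compose[OF filterlim_abs_real real_powr_at_top[OF \<delta>_pos]]
  by (rule lless_abs_at_top)

lemma hderiv_tendsto_imp_0:
  assumes "(hderiv m f \<longlongrightarrow> c) at_top"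
  shows "c = 0"
  using ratio_power_tendsto_if_hderiv_tendsto[OF mem assms]
    strongly_nonpoly_ratio_power_not_tendsto[OF nonpoly, of "c / fact m" m]
  by auto

lemma hderiv_not_eventually_const: "\<not> (\<forall>\<^sub>F t in at_top. hderiv j f t = c)"
proof (induction j arbitrary: c)
  case 0
  show ?case
  proof
    assume "\<forall>\<^sub>F t in at_top. hderiv 0 f t = c"
    moreover have "\<forall>\<^sub>F t in at_top. \<bar>c\<bar> + 1 \<le> \<bar>f t\<bar>"
      using abs_at_top unfolding filterlim_at_top by blast
    ultimately have "eventually (\<lambda>_::real. False) at_top" by eventually_elim simp
    then show False by simp
  qed
next
  case (Suc j)
  show ?case
  proof
    assume const: "\<forall>\<^sub>F t in at_top. hderiv (Suc j) f t = c"
    then have "c = 0" by (intro hderiv_tendsto_imp_0[of "Suc j"] tendsto_eventually)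
    from const eventually_DERIV_hderiv[OF mem, of j]
    have "\<forall>\<^sub>F t in at_top. DERIV (hderiv j f) t :> 0"
      by eventually_elim (simp add: \<open>c = 0\<close>)
    then obtain c' where "\<forall>\<^sub>F t in at_top. hderiv j f t = c'"
      using eventually_const_if_deriv_0 by blast
    with Suc.IH show False by blast
  qed
qed

lemma hderiv_eventually_nonzero: "\<forall>\<^sub>F t in at_top. hderiv j f t \<noteq> 0"
  using eventually_zero_or_nonzero[OF hderiv_mem[OF mem], of j] hderiv_not_eventually_const[of j 0]
  by blast

lemma hderivs_regular: "hderivs_regular f"
  unfolding hderivs_regular_def
proof (intro allI conjI)
  fix j
  show "\<forall>\<^sub>F t in at_top. hderiv j f t \<noteq> 0" by (rule hderiv_eventually_nonzero)
  from tendsto_or_abs_at_top[OF hderiv_mem[OF mem]]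
  show "(hderiv j f \<longlongrightarrow> 0) at_top \<or> filterlim (\<lambda>t. \<bar>hderiv j f t\<bar>) at_top at_top"
  proof
    assume "\<exists>c. (hderiv j f \<longlongrightarrow> c) at_top"
    then obtain c where "(hderiv j f \<longlongrightarrow> c) at_top" by blast
    with hderiv_tendsto_imp_0[OF this] show ?thesis by simp
  qed simp
qed

lemma admissible_Suc:
  assumes "admissible f k"
  shows "admissible f (Suc k)"
proof -
  have "sprec (hderiv k f) (\<lambda>t. t)"
    using assms unfolding admissible_def sprec_def
    by (rule tendsto_divide_0[OF _ filterlim_at_top_imp_at_infinity[OF filterlim_ident]])
  then have "sprec (deriv (hderiv k f)) (deriv (\<lambda>t. t))"
  proof (rule sprec_deriv[OF hderiv_mem[OF mem] ident_mem, rotated 3])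
    show "\<forall>\<^sub>F x in at_top. (x::real) \<noteq> 0"
      using eventually_gt_at_top[of 0] by eventually_elim simp
    show "((\<lambda>x::real. x) \<longlongrightarrow> 0) at_top \<or> filterlim (\<lambda>x::real. \<bar>x\<bar>) at_top at_top"
      using filterlim_abs_real by blast
  qed simp
  then show ?thesis unfolding admissible_def sprec_def by (simp add: hderiv_Suc)
qed

lemma admissible_mono:
  assumes "admissible f k" "k \<le> j"
  shows "admissible f j"
  using assms(2) by (induction rule: dec_induct) (use assms(1) admissible_Suc in auto)

lemma admissible_pos:
  assumes "admissible f k"
  shows "0 < k"
proof (rule ccontr)
  assume "\<not> 0 < k"
  with assms have "(f \<longlongrightarrow> 0) at_top" by (simp add: admissible_def)
  from order_tendstoD(2)[OF tendsto_rabs_zero[OF this] zero_less_one]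
  have "\<forall>\<^sub>F t in at_top. \<bar>f t\<bar> < 1" .
  moreover have "\<forall>\<^sub>F t in at_top. 1 \<le> \<bar>f t\<bar>"
    using abs_at_top unfolding filterlim_at_top by blast
  ultimately have "eventually (\<lambda>_::real. False) at_top" by eventually_elim simp
  then show False by simp
qed

lemma \<delta>_neq_nat: "\<delta> \<noteq> real (i::nat)"
  using \<delta>_pos \<delta>_less_1 by (cases i) auto

lemma lless_powr_hderiv: "lless (\<lambda>t. t powr (\<delta> - real k)) (hderiv k f)"
  using lless_powr_hderiv_powr[OF \<delta>_neq_nat]
    lless_hderiv[OF powr_mem[OF ident_mem filterlim_ident] mem hderivs_regular powr_lless]
  by (rule lless_trans)

lemma lless_hderiv_powr:
  assumes "sprec f (\<lambda>t. t ^ (D + 1))"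
  shows "lless (hderiv k f) (\<lambda>t. t powr (real D + 3/2 - real k))"
proof -
  have "\<forall>\<^sub>F t in at_top. (t::real) ^ (D + 1) \<noteq> 0"
    using eventually_gt_at_top[of 0] by eventually_elim simp
  with assms have "lless f (\<lambda>t. t ^ (D + 1))" by (rule sprec_imp_lless)
  \<comment> \<open>D + 3/2 is a non-integral exponent above D + 1, so all derivatives of t^(D+3/2) are regular.\<close>
  moreover have "lless (\<lambda>t. t ^ (D + 1)) (\<lambda>t. t powr (real D + 3/2))"
  proof -
    have "\<forall>\<^sub>F t in at_top. \<bar>t ^ (D + 1)\<bar> \<le> 1 * \<bar>t powr (real D + 3/2)\<bar>"
      using eventually_ge_at_top[of 1]
    proof eventually_elim
      case (elim t)
      then have "t ^ (D + 1) = t powr real (D + 1)" by (subst powr_realpow) auto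
      also have "\<dots> \<le> t powr (real D + 3/2)" using elim by (intro powr_mono) auto
      finally show ?case using elim by simp
    qed
    then show ?thesis unfolding lless_def by blast
  qed
  ultimately have "lless f (\<lambda>t. t powr (real D + 3/2))" by (rule lless_trans)
  from lless_hderiv[OF mem powr_mem[OF ident_mem filterlim_ident] hderivs_regular_powr[OF half_odd_neq_nat] this]
  show ?thesis using lless_hderiv_powr_powr by (rule lless_trans)
qed

lemma eventually_admissible: "\<forall>\<^sub>F k in sequentially. admissible f k"
proof -
  obtain D where D: "sprec f (\<lambda>t. t ^ (D + 1))"
    using nonpoly unfolding strongly_nonpoly_def by blast
  have "admissible f k" if "D + 2 \<le> k" for k
  proof -
    have "real (D + 2) \<le> real k" using that by (simp only: of_nat_le_iff)
    then have "((\<lambda>t. t powr (real D + 3/2 - real k)) \<longlongrightarrow> 0) at_top"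
      by (intro tendsto_neg_powr filterlim_ident) simp
    with lless_hderiv_powr[OF D] show ?thesis
      unfolding admissible_def by (rule lless_tendsto_0)
  qed
  then show ?thesis unfolding eventually_sequentially by blast
qed

lemma rootderiv_pos: "\<forall>\<^sub>F t in at_top. rootderiv f k t > 0"
  using hderiv_eventually_nonzero[of k] by eventually_elim (simp add: rootderiv_def)

lemma rootderiv_mem:
  assumes "admissible f k"
  shows "rootderiv f k \<in> H"
proof -
  define u where "u t = \<bar>hderiv k f t\<bar>" for t
  have u: "u \<in> H" unfolding u_def by (intro abs_mem hderiv_mem mem)
  have u_pos: "\<forall>\<^sub>F t in at_top. u t > 0"
    unfolding u_def using hderiv_eventually_nonzero[of k] by eventually_elim simp
  have "(u \<longlongrightarrow> 0) at_top"
    unfolding u_def using assms unfolding admissible_def by (rule tendsto_rabs_zero)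
  from filterlim_inverse_at_top[OF this u_pos]
  have "filterlim (\<lambda>t. 1 / u t) at_top at_top" by (simp add: inverse_eq_divide)
  moreover have "(\<lambda>t. 1 / u t) \<in> H"
    using u_pos by (intro inverse_mem[OF u]) (auto elim: eventually_mono)
  ultimately have "(\<lambda>t. (1 / u t) powr (1 / real k)) \<in> H"
    by (intro powr_mem)
  moreover have "\<forall>\<^sub>F t in at_top. (1 / u t) powr (1 / real k) = rootderiv f k t"
    using u_pos by eventually_elim (simp add: rootderiv_def u_def powr_divide powr_minus_divide)
  ultimately show ?thesis by (rule mem_cong)
qed

lemma lless_mult_hderiv_Suc:
  assumes "admissible f k"
  shows "lless (\<lambda>t. t * hderiv (Suc k) f t) (hderiv k f)"
proof -
  let ?u = "hderiv k f"
  have u: "?u \<in> H" by (rule hderiv_mem[OF mem])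
  have u_nz: "\<forall>\<^sub>F t in at_top. ?u t \<noteq> 0" by (rule hderiv_eventually_nonzero)
  have "(\<lambda>t. t * deriv ?u t / ?u t) \<in> H"
    by (intro divide_mem mult_mem ident_mem deriv_mem u u_nz)
  from tendsto_or_abs_at_top[OF this] show ?thesis
  proof
    assume "\<exists>c. ((\<lambda>t. t * deriv ?u t / ?u t) \<longlongrightarrow> c) at_top"
    then obtain c where "((\<lambda>t. t * deriv ?u t / ?u t) \<longlongrightarrow> c) at_top" by blast
    from order_tendstoD(2)[OF tendsto_rabs[OF this] less_add_one] u_nz
    have "\<forall>\<^sub>F t in at_top. \<bar>t * hderiv (Suc k) f t\<bar> \<le> (\<bar>c\<bar> + 1) * \<bar>?u t\<bar>"
      by eventually_elim (simp add: hderiv_Suc abs_divide divide_less_eq)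
    then show ?thesis unfolding lless_def by blast
  next
    \<comment> \<open>Then |ln |f^(k)|| \<ge> (k + 1) ln t eventually, which contradicts t^(\<delta>-k) \<lless> f^(k) \<longrightarrow> 0.\<close>
    assume "filterlim (\<lambda>t. \<bar>t * deriv ?u t / ?u t\<bar>) at_top at_top"
    from ln_abs_ge_if_log_deriv_unbounded[OF u u_nz this, of "real k + 1"]
    have big: "\<forall>\<^sub>F t in at_top. (real k + 1) * ln t \<le> \<bar>ln \<bar>?u t\<bar>\<bar>" by simp
    obtain c where c: "c > 0" "\<forall>\<^sub>F t in at_top. c * \<bar>t powr (\<delta> - real k)\<bar> \<le> \<bar>?u t\<bar>"
      using lless_imp_eventually_ge[OF lless_powr_hderiv] by blast
    have small: "\<forall>\<^sub>F t in at_top. \<bar>?u t\<bar> < 1"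
      using order_tendstoD(2)[OF tendsto_rabs_zero[OF assms[unfolded admissible_def]] zero_less_one] .
    have "\<forall>\<^sub>F t in at_top. \<bar>ln c\<bar> < ln t"
      using ln_at_top unfolding filterlim_at_top_dense by blast
    with big small c(2) u_nz eventually_gt_at_top[of 1]
    have "eventually (\<lambda>_::real. False) at_top"
    proof eventually_elim
      case (elim t)
      have "\<bar>ln \<bar>?u t\<bar>\<bar> \<le> - ln c + real k * ln t"
        using elim c(1) \<delta>_pos by (intro abs_ln_le_if_powr_le) auto
      moreover have "(real k + 1) * ln t = real k * ln t + ln t"
        by (simp add: distrib_right)
      ultimately show False using elim by linarith
    qed
    then show ?thesis by simp
  qed
qed

lemma rootderiv_sprec_Suc:
  assumes "admissible f k"
  shows "sprec (rootderiv f k) (rootderiv f (Suc k))"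
proof -
  have k: "k > 0" by (rule admissible_pos[OF assms])
  obtain B where B: "\<forall>\<^sub>F t in at_top. \<bar>t * hderiv (Suc k) f t\<bar> \<le> B * \<bar>hderiv k f t\<bar>"
    using lless_mult_hderiv_Suc[OF assms] unfolding lless_def by blast
  obtain c where c: "c > 0" "\<forall>\<^sub>F t in at_top. c * \<bar>t powr (\<delta> - real k)\<bar> \<le> \<bar>hderiv k f t\<bar>"
    using lless_imp_eventually_ge[OF lless_powr_hderiv] by blast
  define R where "R t = rootderiv f k t / rootderiv f (Suc k) t" for t
  define N where "N = real k * real (Suc k)"
  have "\<forall>\<^sub>F t in at_top. R t powr N \<le> \<bar>B\<bar> ^ k / c * t powr (- \<delta>)"
    using B c(2) hderiv_eventually_nonzero[of k] hderiv_eventually_nonzero[of "Suc k"]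
      eventually_gt_at_top[of 0]
  proof eventually_elim
    case (elim t)
    have "R t powr N = \<bar>hderiv (Suc k) f t\<bar> ^ k / \<bar>hderiv k f t\<bar> ^ Suc k"
      unfolding R_def N_def rootderiv_def using elim(3,4) k by (intro root_quotient_powr_eq) auto
    also have "\<dots> \<le> \<bar>B\<bar> ^ k / c * t powr (- \<delta>)"
      using elim c(1) by (intro power_quotient_le_powr) (auto simp: abs_mult)
    finally show ?case .
  qed
  then have "\<forall>\<^sub>F t in at_top. norm (R t powr N) \<le> \<bar>B\<bar> ^ k / c * t powr (- \<delta>)"
    by eventually_elim simp
  moreover have "((\<lambda>t. \<bar>B\<bar> ^ k / c * t powr (- \<delta>)) \<longlongrightarrow> 0) at_top"
    using \<delta>_pos by (intro tendsto_mult_right_zero tendsto_neg_powr filterlim_ident) simp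
  ultimately have "((\<lambda>t. R t powr N) \<longlongrightarrow> 0) at_top"
    by (rule Lim_null_comparison)
  then have "((\<lambda>t. (R t powr N) powr (1 / N)) \<longlongrightarrow> 0) at_top"
    by (rule tendsto_zero_powrI[OF _ tendsto_const]) (use k in \<open>auto simp: N_def\<close>)
  moreover have "(R t powr N) powr (1 / N) = R t" for t
    using k by (simp add: powr_powr N_def R_def rootderiv_def)
  ultimately show ?thesis unfolding sprec_def R_def by simp
qed

lemma rootderiv_mem_S:
  assumes "admissible f k"
  shows "rootderiv f k \<in> S H f k"
proof -
  have "\<forall>\<^sub>F t in at_top. \<bar>rootderiv f k t / rootderiv f k t\<bar> = 1"
    using rootderiv_pos[of k] by eventually_elim simp
  then have "((\<lambda>t. \<bar>rootderiv f k t / rootderiv f k t\<bar>) \<longlongrightarrow> 1) at_top"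
    by (rule tendsto_eventually)
  then have "wprec (rootderiv f k) (rootderiv f k)"
    unfolding wprec_def by (intro disjI1 exI[of _ 1]) simp
  then show ?thesis
    unfolding S_def using rootderiv_mem[OF assms] rootderiv_sprec_Suc[OF assms] by simp
qed

lemma rootderiv_mono:
  assumes "admissible f m" "m \<le> n"
  shows "\<forall>\<^sub>F t in at_top. rootderiv f m t \<le> rootderiv f n t"
  using assms(2)
proof (induction rule: dec_induct)
  case (step n)
  have "\<forall>\<^sub>F t in at_top. rootderiv f (Suc n) t \<noteq> 0"
    using rootderiv_pos[of "Suc n"] by eventually_elim simp
  with rootderiv_sprec_Suc[OF admissible_mono[OF assms(1) step(1)]]
  have "\<forall>\<^sub>F t in at_top. \<bar>rootderiv f n t\<bar> < 1 * \<bar>rootderiv f (Suc n) t\<bar>"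
    by (intro sprec_imp_eventually_less) auto
  with step(3) show ?case
    by eventually_elim (simp add: rootderiv_def)
qed simp

lemma rootderiv_le_powr:
  assumes "k > 0"
  shows "\<exists>K>0. \<forall>\<^sub>F t in at_top. rootderiv f k t \<le> K * t powr (1 - \<delta> / real k)"
proof -
  obtain c where c: "c > 0" "\<forall>\<^sub>F t in at_top. c * \<bar>t powr (\<delta> - real k)\<bar> \<le> \<bar>hderiv k f t\<bar>"
    using lless_imp_eventually_ge[OF lless_powr_hderiv] by blast
  have "\<forall>\<^sub>F t in at_top. rootderiv f k t \<le> c powr (- 1 / real k) * t powr (1 - \<delta> / real k)"
    using c(2) eventually_gt_at_top[of 0]
    by eventually_elim (unfold rootderiv_def, rule powr_neg_root_le_if_ge[OF assms _ c(1)], auto)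
  with c(1) show ?thesis by (intro exI[of _ "c powr (- 1 / real k)"]) simp
qed

lemma rootderiv_ge_powr:
  assumes "k > 0" "sprec f (\<lambda>t. t ^ (D + 1))"
  shows "\<exists>K>0. \<forall>\<^sub>F t in at_top. K * t powr (1 - (real D + 3/2) / real k) \<le> rootderiv f k t"
proof -
  obtain C where C: "\<forall>\<^sub>F t in at_top. \<bar>hderiv k f t\<bar> \<le> C * \<bar>t powr (real D + 3/2 - real k)\<bar>"
    using lless_hderiv_powr[OF assms(2)] unfolding lless_def by blast
  have "\<forall>\<^sub>F t in at_top. C powr (- 1 / real k) * t powr (1 - (real D + 3/2) / real k) \<le> rootderiv f k t"
    using C eventually_gt_at_top[of 0] hderiv_eventually_nonzero[of k]
    by eventually_elim (unfold rootderiv_def, rule powr_neg_root_ge_if_le[OF assms(1)], auto)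
  moreover have "C > 0"
  proof (rule ccontr)
    assume "\<not> C > 0"
    from C hderiv_eventually_nonzero[of k] have "eventually (\<lambda>_::real. False) at_top"
    proof eventually_elim
      case (elim t)
      have "C * \<bar>t powr (real D + 3/2 - real k)\<bar> \<le> 0"
        using \<open>\<not> C > 0\<close> by (intro mult_nonpos_nonneg) auto
      with elim show False by simp
    qed
    then show False by simp
  qed
  ultimately show ?thesis by (intro exI[of _ "C powr (- 1 / real k)"]) simp
qed

lemma ex_mem_S_between:
  assumes "h \<in> H" "admissible f L0" "L0 \<le> L1"
    and "wprec (rootderiv f L0) h" "sprec h (rootderiv f L1)"
  shows "\<exists>l\<ge>L0. h \<in> S H f l"
proof -
  obtain d where "L1 = L0 + d" using assms(3) le_Suc_ex by blast
  with assms(5) show ?thesis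
  proof (induction d arbitrary: L1)
    case 0
    then have "sprec h (rootderiv f L0)" by simp
    from sprec_not_wprec[OF this] assms(4) show ?case by contradiction
  next
    case (Suc d)
    let ?l = "L0 + d"
    show ?case
    proof (cases "wprec (rootderiv f ?l) h")
      case True
      with assms(1) Suc.prems have "h \<in> S H f ?l" unfolding S_def by simp
      then show ?thesis by (intro exI[of _ ?l]) simp
    next
      case False
      have "\<forall>\<^sub>F t in at_top. rootderiv f ?l t \<noteq> 0"
        using rootderiv_pos[of ?l] by eventually_elim simp
      with sprec_or_wprec[OF assms(1) rootderiv_mem[OF admissible_mono[OF assms(2), of ?l]]] False
      have "sprec h (rootderiv f ?l)" by simp
      then show ?thesis by (rule Suc.IH) simp
    qed
  qed
qed

end

section \<open>Pairs of germs\<close>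

locale strongly_nonpoly_hardy_pair = good_hardy +
  F: strongly_nonpoly_hardy H f \<delta>1 + G: strongly_nonpoly_hardy H g \<delta>2
  for f \<delta>1 g \<delta>2
begin

lemma hderiv_tendsto_0_if_hderiv_ratio_tendsto:
  assumes lim: "((\<lambda>t. hderiv (Suc j) f t / hderiv (Suc j) g t) \<longlongrightarrow> c) at_top"
    and g0: "(hderiv j g \<longlongrightarrow> 0) at_top"
  shows "(hderiv j f \<longlongrightarrow> 0) at_top"
  using F.hderivs_regular unfolding hderivs_regular_def
proof (elim allE[of _ j] conjE disjE)
  assume f_inf: "filterlim (\<lambda>t. \<bar>hderiv j f t\<bar>) at_top at_top"
  define M where "M = 1 / (\<bar>c\<bar> + 1)"
  have M: "M > 0" by (simp add: M_def add_pos_nonneg)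
  from order_tendstoD(2)[OF tendsto_rabs[OF lim] less_add_one]
  have "\<forall>\<^sub>F t in at_top. DERIV (hderiv j g) t :> hderiv (Suc j) g t
      \<and> DERIV (hderiv j f) t :> hderiv (Suc j) f t \<and> hderiv (Suc j) f t \<noteq> 0
      \<and> M * \<bar>hderiv (Suc j) f t\<bar> \<le> \<bar>hderiv (Suc j) g t\<bar>"
    using eventually_DERIV_hderiv[OF G.mem, of j] eventually_DERIV_hderiv[OF F.mem, of j]
      F.hderiv_eventually_nonzero[of "Suc j"] G.hderiv_eventually_nonzero[of "Suc j"]
  proof eventually_elim
    case (elim t)
    then have "\<bar>hderiv (Suc j) f t\<bar> < (\<bar>c\<bar> + 1) * \<bar>hderiv (Suc j) g t\<bar>"
      by (simp add: abs_divide divide_less_eq)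
    with elim show ?case by (simp add: M_def field_simps)
  qed
  from abs_deriv_ge_imp_abs_ge_unbounded[OF this M f_inf]
  have "\<forall>\<^sub>F t in at_top. \<bar>hderiv j f t\<bar> \<le> 2 / M * \<bar>hderiv j g t\<bar>"
    by eventually_elim (use M in \<open>simp add: field_simps\<close>)
  then have "lless (hderiv j f) (hderiv j g)" unfolding lless_def by blast
  then show ?thesis using g0 by (rule lless_tendsto_0)
qed

lemma hderiv_ratio_tendsto_pred:
  assumes lim: "((\<lambda>t. hderiv (Suc j) f t / hderiv (Suc j) g t) \<longlongrightarrow> c) at_top"
  shows "((\<lambda>t. hderiv j f t / hderiv j g t) \<longlongrightarrow> c) at_top"
proof -
  have Df: "\<forall>\<^sub>F t in at_top. DERIV (hderiv j f) t :> hderiv (Suc j) f t"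
    and Dg: "\<forall>\<^sub>F t in at_top. DERIV (hderiv j g) t :> hderiv (Suc j) g t"
    by (intro eventually_DERIV_hderiv F.mem G.mem)+
  consider "(hderiv j g \<longlongrightarrow> 0) at_top" | "filterlim (\<lambda>t. \<bar>hderiv j g t\<bar>) at_top at_top"
    using G.hderivs_regular unfolding hderivs_regular_def by blast
  then show ?thesis
  proof cases
    case 1
    with lim have "(hderiv j f \<longlongrightarrow> 0) at_top"
      by (rule hderiv_tendsto_0_if_hderiv_ratio_tendsto)
    then show ?thesis
      by (rule lhospital_at_top_0_0[OF _ 1 G.hderiv_eventually_nonzero G.hderiv_eventually_nonzero Df Dg lim])
  next
    case 2
    then show ?thesis
      by (rule lhospital_abs_at_top[OF hderiv_mem[OF G.mem] _ G.hderiv_eventually_nonzero Df Dg lim])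
  qed
qed

lemma ratio_tendsto_if_hderiv_ratio_tendsto:
  assumes "((\<lambda>t. hderiv k f t / hderiv k g t) \<longlongrightarrow> c) at_top"
  shows "((\<lambda>t. f t / g t) \<longlongrightarrow> c) at_top"
  using assms
proof (induction k)
  case (Suc k)
  from hderiv_ratio_tendsto_pred[OF Suc.prems] show ?case by (rule Suc.IH)
qed simp

lemma hderiv_ratio_tendsto_Suc:
  assumes lim: "((\<lambda>t. hderiv j f t / hderiv j g t) \<longlongrightarrow> L) at_top"
  shows "((\<lambda>t. hderiv (Suc j) f t / hderiv (Suc j) g t) \<longlongrightarrow> L) at_top"
proof -
  define u where "u t = hderiv j f t - L * hderiv j g t" for t
  have u: "u \<in> H" unfolding u_def by (intro diff_mem cmult_mem hderiv_mem F.mem G.mem)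
  have "((\<lambda>t. hderiv j f t / hderiv j g t - L) \<longlongrightarrow> 0) at_top"
    using tendsto_diff[OF lim tendsto_const[of L]] by simp
  moreover have "\<forall>\<^sub>F t in at_top. hderiv j f t / hderiv j g t - L = u t / hderiv j g t"
    using G.hderiv_eventually_nonzero[of j] by eventually_elim (simp add: u_def field_simps)
  ultimately have "sprec u (hderiv j g)"
    unfolding sprec_def by (rule Lim_transform_eventually)
  then have "sprec (deriv u) (deriv (hderiv j g))"
    using G.hderivs_regular G.hderiv_eventually_nonzero[of "Suc j"] unfolding hderivs_regular_def
    by (intro sprec_deriv[OF u hderiv_mem[OF G.mem]]) (auto simp: hderiv_Suc)
  moreover have "\<forall>\<^sub>F t in at_top. deriv u t / deriv (hderiv j g) t
      = hderiv (Suc j) f t / hderiv (Suc j) g t - L"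
    using eventually_DERIV_hderiv[OF F.mem, of j] eventually_DERIV_hderiv[OF G.mem, of j]
      G.hderiv_eventually_nonzero[of "Suc j"]
  proof eventually_elim
    case (elim t)
    have "DERIV u t :> hderiv (Suc j) f t - L * hderiv (Suc j) g t"
      unfolding u_def by (intro DERIV_diff DERIV_cmult elim(1,2))
    then show ?case using elim(3) by (simp add: DERIV_imp_deriv hderiv_Suc field_simps)
  qed
  ultimately have "((\<lambda>t. hderiv (Suc j) f t / hderiv (Suc j) g t - L) \<longlongrightarrow> 0) at_top"
    unfolding sprec_def by (rule Lim_transform_eventually)
  from tendsto_add[OF this tendsto_const[of L]] show ?thesis by simp
qed

lemma hderiv_ratio_tendsto:
  assumes "((\<lambda>t. f t / g t) \<longlongrightarrow> L) at_top"
  shows "((\<lambda>t. hderiv j f t / hderiv j g t) \<longlongrightarrow> L) at_top"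
  by (induction j) (simp_all add: assms hderiv_ratio_tendsto_Suc)

lemma S_subset_if_ratio_tendsto:
  assumes lim: "((\<lambda>t. f t / g t) \<longlongrightarrow> L) at_top" and "L \<noteq> 0"
  shows "S H f k \<subseteq> S H g k"
proof
  fix h assume "h \<in> S H f k"
  then have h: "h \<in> H" "wprec (rootderiv f k) h" "sprec h (rootderiv f (Suc k))"
    unfolding S_def by auto
  have ratio: "((\<lambda>t. rootderiv f j t / rootderiv g j t) \<longlongrightarrow> \<bar>L\<bar> powr (- 1 / real j)) at_top" for j
    unfolding rootderiv_def using hderiv_ratio_tendsto[OF lim] \<open>L \<noteq> 0\<close>
    by (rule abs_powr_ratio_tendsto)
  have "wprec (rootderiv g k) h"
    using h(2) ratio _ F.rootderiv_pos by (rule wprec_ratio_tendsto) (use \<open>L \<noteq> 0\<close> in simp)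
  moreover have "\<forall>\<^sub>F t in at_top. rootderiv f (Suc k) t \<noteq> 0"
    using F.rootderiv_pos[of "Suc k"] by eventually_elim simp
  with h(3) ratio have "sprec h (rootderiv g (Suc k))" by (rule sprec_ratio_tendsto)
  ultimately show "h \<in> S H g k" using h(1) unfolding S_def by simp
qed

lemma hsim_if_rootderiv_ratio_tendsto:
  assumes "k > 0" and lim: "((\<lambda>t. \<bar>rootderiv f k t / rootderiv g k t\<bar>) \<longlongrightarrow> L) at_top" and "L > 0"
  shows "hsim f g"
proof -
  define q where "q t = hderiv k f t / hderiv k g t" for t
  have q: "q \<in> H"
    unfolding q_def by (intro divide_mem hderiv_mem F.mem G.mem G.hderiv_eventually_nonzero)
  have "((\<lambda>t. \<bar>rootderiv f k t / rootderiv g k t\<bar> powr (- real k)) \<longlongrightarrow> L powr (- real k)) at_top"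
    using lim \<open>L > 0\<close> by (intro tendsto_powr tendsto_const) auto
  moreover have "\<forall>\<^sub>F t in at_top. \<bar>rootderiv f k t / rootderiv g k t\<bar> powr (- real k) = \<bar>q t\<bar>"
    using F.hderiv_eventually_nonzero[of k] G.hderiv_eventually_nonzero[of k]
  proof eventually_elim
    case (elim t)
    show ?case
      unfolding q_def rootderiv_def by (rule root_quotient_powr_eq_abs_divide[OF elim \<open>k > 0\<close>])
  qed
  ultimately have q_lim: "((\<lambda>t. \<bar>q t\<bar>) \<longlongrightarrow> L powr (- real k)) at_top"
    by (rule Lim_transform_eventually)
  from tendsto_or_abs_at_top[OF q] show ?thesis
  proof
    assume "\<exists>c. (q \<longlongrightarrow> c) at_top"
    then obtain c where c: "(q \<longlongrightarrow> c) at_top" by blast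
    have "\<bar>c\<bar> = L powr (- real k)"
      by (rule tendsto_unique[OF trivial_limit_at_top_linorder tendsto_rabs[OF c] q_lim])
    with \<open>L > 0\<close> have "c \<noteq> 0" by auto
    with c ratio_tendsto_if_hderiv_ratio_tendsto show ?thesis
      unfolding hsim_def q_def by blast
  next
    assume "filterlim (\<lambda>t. \<bar>q t\<bar>) at_top at_top"
    with q_lim show ?thesis
      using not_tendsto_and_filterlim_at_infinity[OF trivial_limit_at_top_linorder]
        filterlim_at_top_imp_at_infinity by blast
  qed
qed

lemma hsim_if_S_eq:
  assumes "admissible f k" "admissible g k" "S H f k = S H g k"
  shows "hsim f g"
proof -
  have "wprec (rootderiv g k) (rootderiv f k)"
    using F.rootderiv_mem_S[OF assms(1)] assms(3) unfolding S_def by auto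
  moreover have "wprec (rootderiv f k) (rootderiv g k)"
    using G.rootderiv_mem_S[OF assms(2)] assms(3) unfolding S_def by auto
  ultimately obtain L where "L > 0" "((\<lambda>t. \<bar>rootderiv f k t / rootderiv g k t\<bar>) \<longlongrightarrow> L) at_top"
    using wprec_antisym by blast
  with F.admissible_pos[OF assms(1)] show ?thesis
    by (intro hsim_if_rootderiv_ratio_tendsto)
qed

lemma rootderiv_le_if_lless:
  assumes "lless g f"
  shows "\<exists>c>0. \<forall>\<^sub>F t in at_top. c * rootderiv f l t \<le> rootderiv g l t"
proof -
  obtain c where c: "c > 0" "\<forall>\<^sub>F t in at_top. c * \<bar>hderiv l g t\<bar> \<le> \<bar>hderiv l f t\<bar>"
    using lless_imp_eventually_ge[OF lless_hderiv[OF G.mem F.mem F.hderivs_regular assms]] by blast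
  have "\<forall>\<^sub>F t in at_top. c powr (1 / real l) * rootderiv f l t \<le> rootderiv g l t"
    using c(2) G.hderiv_eventually_nonzero[of l]
  proof eventually_elim
    case (elim t)
    have "(\<bar>hderiv l f t\<bar> / c) powr (- 1 / real l) \<le> \<bar>hderiv l g t\<bar> powr (- 1 / real l)"
      using elim c(1) by (intro powr_mono2') (auto simp: field_simps)
    then show ?case
      using c(1) by (simp add: rootderiv_def powr_divide powr_minus_divide field_simps)
  qed
  with c(1) show ?thesis by (intro exI[of _ "c powr (1 / real l)"]) simp
qed

lemma le_if_S_inter_nonempty:
  assumes "lless g f" "admissible f k" "S H f k \<inter> S H g l \<noteq> {}"
  shows "l \<le> k"
proof (rule ccontr)
  assume "\<not> l \<le> k"
  obtain h where "h \<in> S H f k" "h \<in> S H g l" using assms(3) by blast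
  then have "wprec (rootderiv g l) h" "sprec h (rootderiv f (Suc k))"
    unfolding S_def by auto
  moreover have "\<forall>\<^sub>F t in at_top. rootderiv g l t \<noteq> 0"
    using G.rootderiv_pos[of l] by eventually_elim simp
  ultimately have sp: "sprec (rootderiv g l) (rootderiv f (Suc k))"
    by (rule wprec_sprec_trans)
  obtain c where c: "c > 0" "\<forall>\<^sub>F t in at_top. c * rootderiv f l t \<le> rootderiv g l t"
    using rootderiv_le_if_lless[OF assms(1)] by blast
  have "\<forall>\<^sub>F t in at_top. rootderiv f (Suc k) t \<le> rootderiv f l t"
    using \<open>\<not> l \<le> k\<close> by (intro F.rootderiv_mono F.admissible_Suc assms(2)) simp
  then have "\<forall>\<^sub>F t in at_top. c * \<bar>rootderiv f (Suc k) t\<bar> \<le> \<bar>rootderiv g l t\<bar>"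
    using c(2) F.rootderiv_pos[of "Suc k"] G.rootderiv_pos[of l]
  proof eventually_elim
    case (elim t)
    have "c * rootderiv f (Suc k) t \<le> c * rootderiv f l t"
      using elim(1) c(1) by simp
    with elim(2-4) show ?case by simp
  qed
  moreover have "\<forall>\<^sub>F t in at_top. rootderiv f (Suc k) t \<noteq> 0"
    using F.rootderiv_pos[of "Suc k"] by eventually_elim simp
  ultimately show False
    using sprec_not_eventually_ge[OF sp _ c(1)] by blast
qed

lemma Suc_le_if_rootderiv_mem_S:
  assumes "lless g f" "admissible f k" "rootderiv f k \<in> S H g l" "\<not> hsim f g"
  shows "l + 1 \<le> k"
proof -
  have "l \<le> k"
    using assms(1,2) F.rootderiv_mem_S[OF assms(2)] assms(3) by (intro le_if_S_inter_nonempty) auto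
  moreover have "l \<noteq> k"
  proof
    assume "l = k"
    with assms(3) have "wprec (rootderiv g k) (rootderiv f k)" unfolding S_def by simp
    then show False unfolding wprec_def
    proof
      assume "\<exists>L>0. ((\<lambda>t. \<bar>rootderiv f k t / rootderiv g k t\<bar>) \<longlongrightarrow> L) at_top"
      with F.admissible_pos[OF assms(2)] assms(4) hsim_if_rootderiv_ratio_tendsto show False
        by blast
    next
      assume "filterlim (\<lambda>t. \<bar>rootderiv f k t / rootderiv g k t\<bar>) at_top at_top"
      moreover obtain c where c: "c > 0" "\<forall>\<^sub>F t in at_top. c * rootderiv f k t \<le> rootderiv g k t"
        using rootderiv_le_if_lless[OF assms(1)] by blast
      ultimately have "\<forall>\<^sub>F t in at_top. 1 / c + 1 \<le> \<bar>rootderiv f k t / rootderiv g k t\<bar>"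
        unfolding filterlim_at_top by blast
      then have "eventually (\<lambda>_::real. False) at_top"
        using c(2) F.rootderiv_pos[of k] G.rootderiv_pos[of k]
      proof eventually_elim
        case (elim t)
        then have "\<bar>rootderiv f k t / rootderiv g k t\<bar> \<le> 1 / c"
          using c(1) by (simp add: abs_divide field_simps)
        with elim(1) show False by simp
      qed
      then show False by simp
    qed
  qed
  ultimately show ?thesis by simp
qed

lemma sprec_rootderiv_rootderiv:
  assumes "0 < k" "0 < l" "sprec g (\<lambda>t. t ^ (D + 1))"
    and "(real D + 3/2) / real l < \<delta>1 / real k"
  shows "sprec (rootderiv f k) (rootderiv g l)"
proof -
  obtain K1 where K1: "\<forall>\<^sub>F t in at_top. rootderiv f k t \<le> K1 * t powr (1 - \<delta>1 / real k)"
    using F.rootderiv_le_powr[OF assms(1)] by blast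
  obtain K2 where K2: "K2 > 0"
    "\<forall>\<^sub>F t in at_top. K2 * t powr (1 - (real D + 3/2) / real l) \<le> rootderiv g l t"
    using G.rootderiv_ge_powr[OF assms(2,3)] by blast
  have "\<forall>\<^sub>F t in at_top. 0 \<le> rootderiv f k t \<and> rootderiv f k t \<le> K1 * t powr (1 - \<delta>1 / real k)"
    using K1 by eventually_elim (simp add: rootderiv_def)
  with K2 assms(4) show ?thesis
    by (intro sprec_if_powr_bounds[where K = K2]) auto
qed


lemma ex_sprec_rootderiv:
  assumes "0 < k"
  shows "\<exists>l\<ge>L. sprec (rootderiv f k) (rootderiv g l)"
proof -
  obtain D where D: "sprec g (\<lambda>t. t ^ (D + 1))"
    using G.nonpoly unfolding strongly_nonpoly_def by blast
  obtain n where n: "(real D + 3/2) * real k / \<delta>1 < real n"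
    using reals_Archimedean2 by blast
  define l where "l = max (Suc L) n"
  have "(real D + 3/2) * real k < \<delta>1 * real n"
    using n F.\<delta>_pos by (simp add: pos_divide_less_eq mult.commute)
  also have "\<dots> \<le> \<delta>1 * real l"
    using F.\<delta>_pos by (intro mult_left_mono) (simp_all add: l_def)
  finally have "(real D + 3/2) / real l < \<delta>1 / real k"
    using assms by (simp add: l_def field_simps)
  with assms D have "sprec (rootderiv f k) (rootderiv g l)"
    by (intro sprec_rootderiv_rootderiv) (simp_all add: l_def)
  then show ?thesis by (intro exI[of _ l]) (simp add: l_def)
qed
end

sublocale strongly_nonpoly_hardy_pair \<subseteq> swap: strongly_nonpoly_hardy_pair H g \<delta>2 f \<delta>1
  by unfold_locales

context strongly_nonpoly_hardy_pair
begin

lemma ex_S_eq_if_hsim: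
  assumes "hsim f g"
  shows "\<exists>k. admissible f k \<and> admissible g k \<and> S H f k = S H g k"
proof -
  obtain L where L: "L \<noteq> 0" "((\<lambda>t. f t / g t) \<longlongrightarrow> L) at_top"
    using assms unfolding hsim_def by blast
  have "((\<lambda>t. g t / f t) \<longlongrightarrow> inverse L) at_top"
    using tendsto_inverse[OF L(2) L(1)] by simp
  then have "S H f k = S H g k" for k
    using L by (intro subset_antisym S_subset_if_ratio_tendsto[OF L(2)]
        swap.S_subset_if_ratio_tendsto[of "inverse L"]) simp_all
  moreover obtain k where "admissible f k" "admissible g k"
    using eventually_conj[OF F.eventually_admissible G.eventually_admissible]
    unfolding eventually_sequentially by blast
  ultimately show ?thesis by blast
qed

lemma eventually_S_inter_nonempty:
  "\<forall>\<^sub>F k in sequentially. admissible f k \<and> (\<exists>l. admissible g l \<and> S H f k \<inter> S H g l \<noteq> {})"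
proof -
  obtain D where D: "sprec f (\<lambda>t. t ^ (D + 1))"
    using F.nonpoly unfolding strongly_nonpoly_def by blast
  obtain N where N: "\<And>l. N \<le> l \<Longrightarrow> admissible g l"
    using G.eventually_admissible unfolding eventually_sequentially by blast
  define L0 where "L0 = Suc N"
  have "\<forall>\<^sub>F k in sequentially. (real D + 3/2) * real L0 / \<delta>2 < real k"
    using filterlim_real_sequentially unfolding filterlim_at_top_dense by blast
  with F.eventually_admissible show ?thesis
  proof eventually_elim
    case (elim k)
    have k: "0 < k" by (rule F.admissible_pos[OF elim(1)])
    \<comment> \<open>The root of f^(k) grows faster than the L0-th root of g and slower than the
      L1-th one, so it lies in some S(g, l) with L0 \<le> l < L1.\<close>
    have "(real D + 3/2) / real k < \<delta>2 / real L0"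
      using elim(2) k G.\<delta>_pos by (simp add: L0_def field_simps)
    with k D have "sprec (rootderiv g L0) (rootderiv f k)"
      by (intro swap.sprec_rootderiv_rootderiv) (simp_all add: L0_def)
    moreover have "\<forall>\<^sub>F t in at_top. rootderiv g L0 t \<noteq> 0" "\<forall>\<^sub>F t in at_top. rootderiv f k t \<noteq> 0"
      using G.rootderiv_pos[of L0] F.rootderiv_pos[of k] by (eventually_elim, simp)+
    ultimately have "wprec (rootderiv g L0) (rootderiv f k)" by (rule sprec_imp_wprec)
    moreover obtain L1 where "L0 \<le> L1" "sprec (rootderiv f k) (rootderiv g L1)"
      using ex_sprec_rootderiv[OF k] by blast
    moreover have "admissible g L0" by (rule N) (simp add: L0_def)
    ultimately obtain l where "L0 \<le> l" "rootderiv f k \<in> S H g l"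
      using G.ex_mem_S_between[OF F.rootderiv_mem[OF elim(1)]] by blast
    with N F.rootderiv_mem_S[OF elim(1)] elim(1) show ?case
      by (intro conjI exI[of _ l]) (auto simp: L0_def)
  qed
qed

lemma infinite_S_inter_nonempty:
  "infinite {(k, l). admissible f k \<and> admissible g l \<and> S H f k \<inter> S H g l \<noteq> {}}"
    (is "infinite ?P")
proof
  assume "finite ?P"
  obtain N where N: "\<And>k. N \<le> k \<Longrightarrow> admissible f k \<and> (\<exists>l. admissible g l \<and> S H f k \<inter> S H g l \<noteq> {})"
    using eventually_S_inter_nonempty unfolding eventually_sequentially by blast
  have "{N..} \<subseteq> fst ` ?P"
  proof
    fix k assume "k \<in> {N..}"
    then obtain l where "admissible f k" "admissible g l" "S H f k \<inter> S H g l \<noteq> {}"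
      using N by fastforce
    then have "(k, l) \<in> ?P" by simp
    then show "k \<in> fst ` ?P" by (rule rev_image_eqI) simp
  qed
  with \<open>finite ?P\<close> show False
    using infinite_Ici[of N] finite_subset by blast
qed

end

theorem propositionA4:
  fixes H :: "(real \<Rightarrow> real) set" and f g :: "real \<Rightarrow> real" and \<delta>1 \<delta>2 :: real
  assumes "good_hardy_field H"
    and "f \<in> H" and "g \<in> H"
    and "strongly_nonpoly f" and "strongly_nonpoly g"
    and "\<delta>1 > 0" and "\<delta>2 > 0"
    and "lless (\<lambda>t. t powr \<delta>1) f" and "lless (\<lambda>t. t powr \<delta>2) g"
    and "lless g f"
  shows "((\<exists>k. admissible f k \<and> admissible g k \<and> S H f k = S H g k) \<longleftrightarrow> hsim f g)
    \<and> (\<forall>k l. admissible f k \<longrightarrow> admissible g l \<longrightarrow> S H f k \<inter> S H g l \<noteq> {} \<longrightarrow> k \<ge> l)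
    \<and> (\<forall>k l. admissible f k \<longrightarrow> admissible g l \<longrightarrow> rootderiv f k \<in> S H g l \<longrightarrow>
           \<not> hsim f g \<longrightarrow> k \<ge> l + 1)
    \<and> infinite {(k, l). admissible f k \<and> admissible g l \<and> S H f k \<inter> S H g l \<noteq> {}}"
proof -
  interpret strongly_nonpoly_hardy_pair H f "min \<delta>1 (1/2)" g "min \<delta>2 (1/2)"
  proof unfold_locales
    show "lless (\<lambda>t. t powr min \<delta>1 (1/2)) f"
      using lless_powr[of "min \<delta>1 (1/2)" \<delta>1] assms(8) by (auto intro: lless_trans)
    show "lless (\<lambda>t. t powr min \<delta>2 (1/2)) g"
      using lless_powr[of "min \<delta>2 (1/2)" \<delta>2] assms(9) by (auto intro: lless_trans)
  qed (use assms in auto)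
  show ?thesis
    using hsim_if_S_eq ex_S_eq_if_hsim le_if_S_inter_nonempty[OF assms(10)]
      Suc_le_if_rootderiv_mem_S[OF assms(10)] infinite_S_inter_nonempty
    by blast
qed

end
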